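(* Let $f,h_1,\dots,h_p\colon\mathbb R^n\times\mathbb R^m\to\mathbb R$ be continuously differentiable, $I=\{1,\dots,\ell\}$, $J=\{\ell+1,\dots,p\}$, $\Gamma(x):=\{y\mid h_i(x,y)\le0\ (i\in I),\ h_i(x,y)=0\ (i\in J)\}$, $\varphi(x):=\inf\{f(x,y)\mid y\in\Gamma(x)\}$ and $S(x):=\operatorname{argmin}\{f(x,y)\mid y\in\Gamma(x)\}$. Fix $\bar x\in\operatorname{dom}\Gamma$ and assume one of the following: (a) (A1) for each $x$, $h_i(x,\cdot)$ is convex for $i\in I$ and affine for $i\in J$; (A2) $\Gamma$ is locally bounded at $\bar x$; RCPLD$_\Gamma$ holds at each point of $\{\bar x\}\times\Gamma(\bar x)$; and $\bar x$ is an interior point of $\operatorname{dom}\Gamma$; (b) there is $\bar y\in S(\bar x)$ such that $S$ is inner semicontinuous at $(\bar x,\bar y)$ and RCPLD$_\Gamma$ holds at $(\bar x,\bar y)$. Then $\varphi$ is locally Lipschitz continuous at $\bar x$.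
   Context: $\operatorname{dom}\Gamma:=\{x\mid\Gamma(x)\neq\emptyset\}$; $\inf\emptyset=+\infty$. $\Gamma$ is locally bounded at $\bar x$ if there are a bounded set $B$ and a neighborhood $V$ of $\bar x$ with $\Gamma(x)\subset B$ for $x\in V$. $S$ is inner semicontinuous at $(\bar x,\bar y)$ if for every sequence $x^k\to\bar x$ there is $y^k\to\bar y$ with $y^k\in S(x^k)$ for large $k$. A pair of finite families $((a^i)_{i\in I_1},(b^i)_{i\in I_2})$ is positive-linearly dependent if there are $\alpha_i\ge0$, $\beta_i$, not all zero, with $\sum\alpha_ia^i+\sum\beta_ib^i=0$. $I(\bar x,\bar y):=\{i\in I\mid h_i(\bar x,\bar y)=0\}$. RCPLD$_\Gamma$ holds at $(\bar x,\bar y)\in\operatorname{gph}\Gamma$ if there are a neighborhood $U$ of $(\bar x,\bar y)$ and $\mathcal S\subset J$ such that: (i) $\{\nabla_yh_i(\bar x,\bar y)\mid i\in\mathcal S\}$ is a basis of the span of $\{\nabla_yh_i(\bar x,\bar y)\mid i\in J\}$; (ii) $(\nabla_yh_i(x,y))_{i\in J}$ has constant rank on $U$; (iii) for each $K\subset I(\bar x,\bar y)$ with $((\nabla_yh_i(\bar x,\bar y))_{i\in K},(\nabla_yh_i(\bar x,\bar y))_{i\in\mathcal S})$ positive-linearly dependent, $(\nabla_yh_i(x,y))_{i\in K\cup\mathcal S}$ is linearly dependent for each $(x,y)\in U$. *)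

theory Defs
  imports "HOL-Analysis.Analysis"
begin

definition C1_fun :: "('a::euclidean_space \<Rightarrow> real) \<Rightarrow> bool" where
  "C1_fun g \<longleftrightarrow> (\<exists>g'. (\<forall>z. (g has_derivative blinfun_apply (g' z)) (at z)) \<and> continuous_on UNIV g')"

definition grad_y :: "((real^'n) \<times> (real^'m) \<Rightarrow> real) \<Rightarrow> real^'n \<Rightarrow> real^'m \<Rightarrow> real^'m" where
  "grad_y g x y = (\<chi> j. frechet_derivative g (at (x, y)) (0, axis j 1))"

definition idxI :: "nat \<Rightarrow> nat set" where "idxI l = {1..l}"
definition idxJ :: "nat \<Rightarrow> nat \<Rightarrow> nat set" where "idxJ l p = {l+1..p}"

definition feas :: "(nat \<Rightarrow> (real^'n) \<times> (real^'m) \<Rightarrow> real) \<Rightarrow> nat \<Rightarrow> nat \<Rightarrow> real^'n \<Rightarrow> (real^'m) set" where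
  "feas h l p x = {y. (\<forall>i\<in>idxI l. h i (x, y) \<le> 0) \<and> (\<forall>i\<in>idxJ l p. h i (x, y) = 0)}"

text \<open>Optimal value function (inf of the empty set is +\<infinity>).\<close>
definition optval :: "((real^'n) \<times> (real^'m) \<Rightarrow> real) \<Rightarrow> (nat \<Rightarrow> (real^'n) \<times> (real^'m) \<Rightarrow> real) \<Rightarrow> nat \<Rightarrow> nat \<Rightarrow> real^'n \<Rightarrow> ereal" where
  "optval f h l p x = (INF y\<in>feas h l p x. ereal (f (x, y)))"

definition argminset :: "((real^'n) \<times> (real^'m) \<Rightarrow> real) \<Rightarrow> (nat \<Rightarrow> (real^'n) \<times> (real^'m) \<Rightarrow> real) \<Rightarrow> nat \<Rightarrow> nat \<Rightarrow> real^'n \<Rightarrow> (real^'m) set" where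
  "argminset f h l p x = {y \<in> feas h l p x. \<forall>y'\<in>feas h l p x. f (x, y) \<le> f (x, y')}"

definition domset :: "('a \<Rightarrow> 'b set) \<Rightarrow> 'a set" where
  "domset G = {x. G x \<noteq> {}}"

definition locally_bounded_at :: "('a::topological_space \<Rightarrow> 'b::metric_space set) \<Rightarrow> 'a \<Rightarrow> bool" where
  "locally_bounded_at G xb \<longleftrightarrow> (\<exists>B V. bounded B \<and> open V \<and> xb \<in> V \<and> (\<forall>x\<in>V. G x \<subseteq> B))"

definition inner_semicont_at :: "('a::topological_space \<Rightarrow> 'b::topological_space set) \<Rightarrow> 'a \<Rightarrow> 'b \<Rightarrow> bool" where
  "inner_semicont_at S xb yb \<longleftrightarrow>
     (\<forall>X. X \<longlonglongrightarrow> xb \<longrightarrow> (\<exists>Y. Y \<longlonglongrightarrow> yb \<and> (\<forall>\<^sub>F k in sequentially. Y k \<in> S (X k))))"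

definition lin_dep_fam :: "'i set \<Rightarrow> ('i \<Rightarrow> 'v::real_vector) \<Rightarrow> bool" where
  "lin_dep_fam K v \<longleftrightarrow> (\<exists>c. (\<exists>i\<in>K. c i \<noteq> 0) \<and> (\<Sum>i\<in>K. c i *\<^sub>R v i) = 0)"

definition pos_lin_dep :: "'i set \<Rightarrow> ('i \<Rightarrow> 'v::real_vector) \<Rightarrow> 'i set \<Rightarrow> ('i \<Rightarrow> 'v) \<Rightarrow> bool" where
  "pos_lin_dep K1 a K2 b \<longleftrightarrow> (\<exists>\<alpha> \<beta>. (\<forall>i\<in>K1. \<alpha> i \<ge> 0) \<and> ((\<exists>i\<in>K1. \<alpha> i \<noteq> 0) \<or> (\<exists>i\<in>K2. \<beta> i \<noteq> 0))
       \<and> (\<Sum>i\<in>K1. \<alpha> i *\<^sub>R a i) + (\<Sum>i\<in>K2. \<beta> i *\<^sub>R b i) = 0)"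

definition active_set :: "(nat \<Rightarrow> (real^'n) \<times> (real^'m) \<Rightarrow> real) \<Rightarrow> nat \<Rightarrow> real^'n \<Rightarrow> real^'m \<Rightarrow> nat set" where
  "active_set h l x y = {i \<in> idxI l. h i (x, y) = 0}"

definition RCPLD :: "(nat \<Rightarrow> (real^'n) \<times> (real^'m) \<Rightarrow> real) \<Rightarrow> nat \<Rightarrow> nat \<Rightarrow> real^'n \<Rightarrow> real^'m \<Rightarrow> bool" where
  "RCPLD h l p xb yb \<longleftrightarrow>
    (\<exists>U S. open U \<and> (xb, yb) \<in> U \<and> S \<subseteq> idxJ l p \<and>
      \<comment> \<open>(i) basis of the span\<close>
      \<not> lin_dep_fam S (\<lambda>i. grad_y (h i) xb yb) \<and>
      span ((\<lambda>i. grad_y (h i) xb yb) ` S) = span ((\<lambda>i. grad_y (h i) xb yb) ` idxJ l p) \<and>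
      \<comment> \<open>(ii) constant rank on U\<close>
      (\<forall>(x, y)\<in>U. dim ((\<lambda>i. grad_y (h i) x y) ` idxJ l p) = dim ((\<lambda>i. grad_y (h i) xb yb) ` idxJ l p)) \<and>
      \<comment> \<open>(iii)\<close>
      (\<forall>K \<subseteq> active_set h l xb yb.
         pos_lin_dep K (\<lambda>i. grad_y (h i) xb yb) S (\<lambda>i. grad_y (h i) xb yb) \<longrightarrow>
         (\<forall>(x, y)\<in>U. lin_dep_fam (K \<union> S) (\<lambda>i. grad_y (h i) x y))))"

definition locally_lipschitz_at_ereal :: "('a::metric_space \<Rightarrow> ereal) \<Rightarrow> 'a \<Rightarrow> bool" where
  "locally_lipschitz_at_ereal g xb \<longleftrightarrow>
     (\<exists>e>0. \<exists>L. (\<forall>x\<in>ball xb e. \<bar>g x\<bar> \<noteq> \<infinity>) \<and>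
        L-lipschitz_on (ball xb e) (\<lambda>x. real_of_ereal (g x)))"

end

(* The value function inherits the Lipschitz continuity of f once the feasible-set
   map Gamma satisfies an Aubin-type estimate near the relevant minimisers: a point y' of
   Gamma(x') lies within kappa |x - x'| of Gamma(x), so f(x, z) <= f(x', y') + L (1 + kappa) |x - x'|
   for some z in Gamma(x).

   The estimate is derived from RCPLD. Project y' onto Gamma(x), giving z, and replace z by a
   minimiser w of the penalised proximal problem |v - y'|^2 + |v - z|^2 + rho * infeasibility(v);
   for large rho, w is arbitrarily close to z and satisfies an approximate KKT system. RCPLD lets one
   rewrite its multipliers on a family of constraint gradients that is positively linearly
   independent with a modulus c uniform near (xb, yb); this bounds the multipliers, and
   linearising the constraints yields |y' - z| <= 3 M |x - x'| / c.

   Under (b), inner semicontinuity of the solution map supplies minimisers close to yb. Under (a),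
   compactness of Gamma(xb) makes the estimate uniform over Gamma(xb), and connectedness of the
   convex set Gamma(xb) turns it into a Lipschitz lower estimate of Gamma around xb. *)

theory Submission
  imports Defs
begin

section \<open>Continuously differentiable functions and partial gradients\<close>

lemma C1_funE:
  assumes "C1_fun g"
  obtains g' where "\<And>z. (g has_derivative blinfun_apply (g' z)) (at z)" "continuous_on UNIV g'"
  using assms unfolding C1_fun_def by blast

lemma C1_fun_continuous: "C1_fun g \<Longrightarrow> continuous_on UNIV g"
  by (metis C1_funE continuous_at_imp_continuous_on has_derivative_continuous)

lemma C1_fun_continuous_slice: "C1_fun g \<Longrightarrow> continuous_on S (\<lambda>y. g (x, y))"
  by (rule continuous_on_compose2[OF C1_fun_continuous]) (auto intro: continuous_intros)

lemma linear_eq_inner_axis: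
  fixes L :: "real^'m \<Rightarrow> real"
  assumes "linear L"
  shows "L v = (\<chi> j. L (axis j 1)) \<bullet> v"
proof -
  have "L v = L (\<Sum>j\<in>UNIV. v$j *\<^sub>R axis j 1)"
    using basis_expansion[of v] by (simp add: scalar_mult_eq_scaleR)
  also have "\<dots> = (\<Sum>j\<in>UNIV. v$j * L (axis j 1))"
    using assms by (simp add: linear_sum linear_scale)
  also have "\<dots> = (\<chi> j. L (axis j 1)) \<bullet> v"
    by (simp add: inner_vec_def mult.commute)
  finally show ?thesis .
qed

lemma grad_y_eq:
  fixes g :: "(real^'n) \<times> (real^'m) \<Rightarrow> real"
  assumes "\<And>z. (g has_derivative blinfun_apply (g' z)) (at z)"
  shows "grad_y g x y = (\<chi> j. blinfun_apply (g' (x, y)) (0, axis j 1))"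
  unfolding grad_y_def using frechet_derivative_at[OF assms[of "(x, y)"]] by simp

lemma blinfun_apply_partial_y:
  fixes g :: "(real^'n) \<times> (real^'m) \<Rightarrow> real"
  assumes "\<And>z. (g has_derivative blinfun_apply (g' z)) (at z)"
  shows "blinfun_apply (g' (x, y)) (0, v) = grad_y g x y \<bullet> v"
proof -
  have "linear (\<lambda>v::real^'m. (0::real^'n, v))"
    by (simp add: linear_iff)
  then have "linear (\<lambda>v::real^'m. blinfun_apply (g' (x, y)) (0, v))"
    using linear_compose[OF _ bounded_linear.linear[OF blinfun.bounded_linear_right]]
    by (simp add: o_def)
  then show ?thesis
    using linear_eq_inner_axis grad_y_eq[OF assms] by simp
qed

lemma has_derivative_grad_y:
  fixes g :: "(real^'n) \<times> (real^'m) \<Rightarrow> real"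
  assumes "C1_fun g"
  shows "((\<lambda>y. g (x, y)) has_derivative (\<lambda>v. grad_y g x y \<bullet> v)) (at y within T)"
proof -
  obtain g' where g': "\<And>z. (g has_derivative blinfun_apply (g' z)) (at z)"
    using C1_funE[OF assms] by blast
  have "((\<lambda>y. (x, y)) has_derivative (\<lambda>v. (0, v))) (at y within T)"
    by (auto intro!: derivative_eq_intros)
  from has_derivative_in_compose[OF this has_derivative_at_withinI[OF g'[of "(x, y)"]]]
  show ?thesis
    using blinfun_apply_partial_y[OF g'] by (simp add: o_def)
qed

lemma continuous_on_grad_y:
  fixes g :: "(real^'n) \<times> (real^'m) \<Rightarrow> real"
  assumes "C1_fun g"
  shows "continuous_on UNIV (\<lambda>(x, y). grad_y g x y)"
proof -
  obtain g' where g': "\<And>z. (g has_derivative blinfun_apply (g' z)) (at z)"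
    and cont: "continuous_on UNIV g'"
    using C1_funE[OF assms] by blast
  have "continuous_on UNIV (\<lambda>q. \<chi> j. blinfun_apply (g' q) (0, axis j 1))"
    by (intro continuous_intros cont)
  moreover have "(\<lambda>(x, y). grad_y g x y) = (\<lambda>q. \<chi> j. blinfun_apply (g' q) (0, axis j 1))"
    using grad_y_eq[OF g'] by auto
  ultimately show ?thesis
    by simp
qed

lemma C1_fun_lipschitz_on_cball:
  fixes g :: "'a::euclidean_space \<Rightarrow> real"
  assumes "C1_fun g"
  obtains L where "L-lipschitz_on (cball c R) g"
proof -
  obtain g' where g': "\<And>z. (g has_derivative blinfun_apply (g' z)) (at z)"
    and cont: "continuous_on UNIV g'"
    using C1_funE[OF assms] by blast
  have "compact (g' ` cball c R)"
    by (rule compact_continuous_image) (use cont continuous_on_subset in auto)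
  then obtain B where "B > 0" "\<forall>D\<in>g' ` cball c R. norm D \<le> B"
    using compact_imp_bounded bounded_pos by metis
  then have "B-lipschitz_on (cball c R) g"
    by (intro bounded_derivative_imp_lipschitz[where f'="\<lambda>z. blinfun_apply (g' z)"]
        has_derivative_at_withinI[OF g']) (auto simp: norm_blinfun.rep_eq[symmetric])
  then show thesis ..
qed

lemma grad_y_taylor_bound:
  fixes g :: "(real^'n) \<times> (real^'m) \<Rightarrow> real"
  assumes "C1_fun g"
    and osc: "\<forall>w\<in>closed_segment y1 y2. norm (grad_y g x w - grad_y g x y2) \<le> \<omega>"
  shows "\<bar>g (x, y1) - g (x, y2) - grad_y g x y2 \<bullet> (y1 - y2)\<bar> \<le> \<omega> * norm (y1 - y2)"
proof -
  let ?r = "\<lambda>w. g (x, w) - grad_y g x y2 \<bullet> w"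
  have "norm (?r y1 - ?r y2) \<le> \<omega> * norm (y1 - y2)"
  proof (rule differentiable_bound[OF convex_closed_segment])
    show "(?r has_derivative (\<lambda>v. grad_y g x w \<bullet> v - grad_y g x y2 \<bullet> v))
        (at w within closed_segment y1 y2)" for w
      by (intro has_derivative_diff has_derivative_grad_y[OF assms(1)]
          bounded_linear.has_derivative[OF bounded_linear_inner_right has_derivative_ident])
    show "onorm (\<lambda>v. grad_y g x w \<bullet> v - grad_y g x y2 \<bullet> v) \<le> \<omega>"
      if "w \<in> closed_segment y1 y2" for w
    proof (rule onorm_le)
      fix v
      have "norm (grad_y g x w \<bullet> v - grad_y g x y2 \<bullet> v) = \<bar>(grad_y g x w - grad_y g x y2) \<bullet> v\<bar>"
        by (simp add: inner_diff_left)
      also have "\<dots> \<le> norm (grad_y g x w - grad_y g x y2) * norm v"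
        by (rule Cauchy_Schwarz_ineq2)
      also have "\<dots> \<le> \<omega> * norm v"
        using osc that by (simp add: mult_right_mono)
      finally show "norm (grad_y g x w \<bullet> v - grad_y g x y2 \<bullet> v) \<le> \<omega> * norm v" .
    qed
  qed auto
  then show ?thesis
    by (simp add: inner_diff_right)
qed


section \<open>Quantitative positive-linear independence\<close>

definition pos_lin_indep_modulus :: "'i set \<Rightarrow> 'i set \<Rightarrow> ('i \<Rightarrow> 'v::real_normed_vector) \<Rightarrow> real \<Rightarrow> bool" where
  "pos_lin_indep_modulus K S b c \<longleftrightarrow> (\<forall>\<alpha> \<beta>. (\<forall>i\<in>K. 0 \<le> \<alpha> i) \<longrightarrow>
     c * ((\<Sum>i\<in>K. \<alpha> i) + (\<Sum>i\<in>S. \<bar>\<beta> i\<bar>)) \<le> norm ((\<Sum>i\<in>K. \<alpha> i *\<^sub>R b i) + (\<Sum>i\<in>S. \<beta> i *\<^sub>R b i)))"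

lemma bounded_coordinates_convergent_subseq:
  fixes C :: "nat \<Rightarrow> 'i \<Rightarrow> real"
  assumes "finite D" "\<And>n k. k \<in> D \<Longrightarrow> \<bar>C n k\<bar> \<le> 1"
  obtains l r where "strict_mono r" "\<And>k. k \<in> D \<Longrightarrow> (\<lambda>n. C (r n) k) \<longlonglongrightarrow> l k"
proof -
  have "\<forall>d\<subseteq>D. \<exists>l r. strict_mono r \<and> (\<forall>e>0. eventually (\<lambda>n. \<forall>k\<in>d. dist (C (r n) k) (l k) < e) sequentially)"
    by (rule compact_lemma_general[where unproj="\<lambda>x. x"])
      (use assms in \<open>auto simp: bounded_iff intro!: exI[of _ 1]\<close>)
  then obtain l and r :: "nat \<Rightarrow> nat" where "strict_mono r"
    and conv: "\<And>e. e > 0 \<Longrightarrow> eventually (\<lambda>n. \<forall>k\<in>D. dist (C (r n) k) (l k) < e) sequentially"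
    by blast
  moreover have "(\<lambda>n. C (r n) k) \<longlonglongrightarrow> l k" if "k \<in> D" for k
    unfolding tendsto_iff using conv that by (fastforce elim: eventually_mono)
  ultimately show thesis
    using that by blast
qed

lemma pos_lin_dep_of_vanishing_combinations:
  fixes b :: "'i \<Rightarrow> 'v::real_normed_vector"
  assumes fin: "finite K" "finite S"
    and nonneg: "\<And>n i. i \<in> K \<Longrightarrow> 0 \<le> A n i"
    and normalized: "\<And>n. (\<Sum>i\<in>K. A n i) + (\<Sum>i\<in>S. \<bar>B n i\<bar>) = 1"
    and vanishing: "(\<lambda>n. (\<Sum>i\<in>K. A n i *\<^sub>R b i) + (\<Sum>i\<in>S. B n i *\<^sub>R b i)) \<longlonglongrightarrow> 0"
  shows "pos_lin_dep K b S b"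
proof -
  define C where "C n = case_sum (A n) (B n)" for n
  have bounded: "\<bar>C n k\<bar> \<le> 1" if "k \<in> Inl ` K \<union> Inr ` S" for n k
  proof -
    have sums_nonneg: "0 \<le> (\<Sum>i\<in>K. A n i)" "0 \<le> (\<Sum>i\<in>S. \<bar>B n i\<bar>)"
      using nonneg by (auto intro: sum_nonneg)
    have "\<bar>A n i\<bar> \<le> 1" if "i \<in> K" for i
    proof -
      have "A n i \<le> (\<Sum>i\<in>K. A n i)"
        using that nonneg fin by (auto intro: member_le_sum)
      then show ?thesis
        using nonneg[OF that, of n] sums_nonneg normalized[of n] by linarith
    qed
    moreover have "\<bar>B n i\<bar> \<le> 1" if "i \<in> S" for i
    proof -
      have "\<bar>B n i\<bar> \<le> (\<Sum>i\<in>S. \<bar>B n i\<bar>)"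
        using that fin by (auto intro: member_le_sum)
      then show ?thesis
        using sums_nonneg normalized[of n] by linarith
    qed
    ultimately show ?thesis
      using that by (auto simp: C_def)
  qed
  obtain l and r :: "nat \<Rightarrow> nat" where r: "strict_mono r"
    and conv_coord: "\<And>k. k \<in> Inl ` K \<union> Inr ` S \<Longrightarrow> (\<lambda>n. C (r n) k) \<longlonglongrightarrow> l k"
    by (rule bounded_coordinates_convergent_subseq[of "Inl ` K \<union> Inr ` S" C]) (use fin bounded in auto)
  define \<alpha> where "\<alpha> i = l (Inl i)" for i
  define \<beta> where "\<beta> i = l (Inr i)" for i
  have A_lim: "(\<lambda>n. A (r n) i) \<longlonglongrightarrow> \<alpha> i" if "i \<in> K" for i
    using conv_coord[of "Inl i"] that by (simp add: C_def \<alpha>_def)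
  have B_lim: "(\<lambda>n. B (r n) i) \<longlonglongrightarrow> \<beta> i" if "i \<in> S" for i
    using conv_coord[of "Inr i"] that by (simp add: C_def \<beta>_def)
  have "(\<lambda>n. (\<Sum>i\<in>K. A (r n) i) + (\<Sum>i\<in>S. \<bar>B (r n) i\<bar>)) \<longlonglongrightarrow> (\<Sum>i\<in>K. \<alpha> i) + (\<Sum>i\<in>S. \<bar>\<beta> i\<bar>)"
    by (intro tendsto_intros A_lim B_lim)
  then have norm1: "(\<Sum>i\<in>K. \<alpha> i) + (\<Sum>i\<in>S. \<bar>\<beta> i\<bar>) = 1"
    using normalized by (simp add: LIMSEQ_const_iff)
  have "(\<lambda>n. (\<Sum>i\<in>K. A (r n) i *\<^sub>R b i) + (\<Sum>i\<in>S. B (r n) i *\<^sub>R b i))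
      \<longlonglongrightarrow> (\<Sum>i\<in>K. \<alpha> i *\<^sub>R b i) + (\<Sum>i\<in>S. \<beta> i *\<^sub>R b i)"
    by (intro tendsto_intros A_lim B_lim)
  moreover have "(\<lambda>n. (\<Sum>i\<in>K. A (r n) i *\<^sub>R b i) + (\<Sum>i\<in>S. B (r n) i *\<^sub>R b i)) \<longlonglongrightarrow> 0"
    using LIMSEQ_subseq_LIMSEQ[OF vanishing r] by (simp add: o_def)
  ultimately have comb0: "(\<Sum>i\<in>K. \<alpha> i *\<^sub>R b i) + (\<Sum>i\<in>S. \<beta> i *\<^sub>R b i) = 0"
    by (rule LIMSEQ_unique)
  have "\<forall>i\<in>K. 0 \<le> \<alpha> i"
    using A_lim nonneg by (blast intro: LIMSEQ_le_const)
  moreover have "(\<exists>i\<in>K. \<alpha> i \<noteq> 0) \<or> (\<exists>i\<in>S. \<beta> i \<noteq> 0)"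
    using norm1 by (metis (no_types, lifting) abs_zero add.right_neutral sum.neutral zero_neq_one)
  ultimately show ?thesis
    unfolding pos_lin_dep_def using comb0 by blast
qed

lemma pos_lin_indep_modulus_exists:
  fixes b :: "'i \<Rightarrow> 'v::real_normed_vector"
  assumes fin: "finite K" "finite S" and indep: "\<not> pos_lin_dep K b S b"
  shows "\<exists>c>0. pos_lin_indep_modulus K S b c"
proof (rule ccontr)
  define N where "N \<alpha> \<beta> = (\<Sum>i\<in>K. \<alpha> i) + (\<Sum>i\<in>S. \<bar>\<beta> i\<bar>)" for \<alpha> \<beta> :: "'i \<Rightarrow> real"
  define F where "F \<alpha> \<beta> = (\<Sum>i\<in>K. \<alpha> i *\<^sub>R b i) + (\<Sum>i\<in>S. \<beta> i *\<^sub>R b i)" for \<alpha> \<beta> :: "'i \<Rightarrow> real"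
  assume "\<not> ?thesis"
  then have "\<forall>n. \<exists>\<alpha> \<beta>. (\<forall>i\<in>K. 0 \<le> \<alpha> i) \<and> norm (F \<alpha> \<beta>) < 1 / Suc n * N \<alpha> \<beta>"
    unfolding pos_lin_indep_modulus_def N_def F_def
    by (metis not_le of_nat_0_less_iff zero_less_Suc zero_less_divide_1_iff)
  then obtain A B where nonneg: "\<And>n i. i \<in> K \<Longrightarrow> 0 \<le> A n i"
    and small: "\<And>n. norm (F (A n) (B n)) < 1 / Suc n * N (A n) (B n)"
    by metis
  have N_pos: "0 < N (A n) (B n)" for n
  proof -
    have "0 < 1 / Suc n * N (A n) (B n)"
      using small[of n] norm_ge_zero[of "F (A n) (B n)"] by linarith
    then show ?thesis
      by (simp add: zero_less_divide_iff add_pos_nonneg)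
  qed
  define A' where "A' n i = A n i / N (A n) (B n)" for n i
  define B' where "B' n i = B n i / N (A n) (B n)" for n i
  have normalized: "N (A' n) (B' n) = 1" for n
    using N_pos[of n] unfolding N_def A'_def B'_def
    by (simp add: sum_divide_distrib[symmetric] abs_div add_divide_distrib[symmetric])
  moreover have "F (A' n) (B' n) = F (A n) (B n) /\<^sub>R N (A n) (B n)" for n
    unfolding F_def A'_def B'_def
    by (simp add: scaleR_right.sum scaleR_add_right divide_inverse_commute)
  moreover have "norm (F (A n) (B n)) / N (A n) (B n) < 1 / Suc n" for n
    by (metis N_pos mult.commute pos_divide_less_eq small)
  ultimately have "norm (F (A' n) (B' n)) \<le> 1 / Suc n" for n
    using N_pos[of n] by (simp add: divide_inverse_commute less_imp_le)
  then have "(\<lambda>n. F (A' n) (B' n)) \<longlonglongrightarrow> 0"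
    by (intro Lim_null_comparison[OF _ LIMSEQ_Suc[OF lim_const_over_n[of 1]]] always_eventually)
      auto
  moreover have "\<And>n i. i \<in> K \<Longrightarrow> 0 \<le> A' n i"
    using nonneg N_pos by (auto simp: A'_def intro!: divide_nonneg_pos)
  ultimately have "pos_lin_dep K b S b"
    using pos_lin_dep_of_vanishing_combinations[OF fin, of A' B' b] normalized
    by (simp add: N_def F_def)
  with indep show False ..
qed

lemma pos_lin_indep_modulus_mono:
  assumes "pos_lin_indep_modulus K S b c" "c' \<le> c"
  shows "pos_lin_indep_modulus K S b c'"
  unfolding pos_lin_indep_modulus_def
proof (intro allI impI)
  fix \<alpha> \<beta> :: "'a \<Rightarrow> real"
  assume nonneg: "\<forall>i\<in>K. 0 \<le> \<alpha> i"
  then have "c' * ((\<Sum>i\<in>K. \<alpha> i) + (\<Sum>i\<in>S. \<bar>\<beta> i\<bar>)) \<le> c * ((\<Sum>i\<in>K. \<alpha> i) + (\<Sum>i\<in>S. \<bar>\<beta> i\<bar>))"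
    using assms(2) by (intro mult_right_mono add_nonneg_nonneg sum_nonneg) auto
  also have "\<dots> \<le> norm ((\<Sum>i\<in>K. \<alpha> i *\<^sub>R b i) + (\<Sum>i\<in>S. \<beta> i *\<^sub>R b i))"
    using assms(1) nonneg unfolding pos_lin_indep_modulus_def by blast
  finally show "c' * ((\<Sum>i\<in>K. \<alpha> i) + (\<Sum>i\<in>S. \<bar>\<beta> i\<bar>)) \<le> norm ((\<Sum>i\<in>K. \<alpha> i *\<^sub>R b i) + (\<Sum>i\<in>S. \<beta> i *\<^sub>R b i))" .
qed

lemma pos_lin_indep_modulus_perturb:
  fixes a b :: "'i \<Rightarrow> 'v::real_normed_vector"
  assumes mod: "pos_lin_indep_modulus K S b c" and close: "\<forall>i\<in>K \<union> S. norm (a i - b i) \<le> \<epsilon>"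
  shows "pos_lin_indep_modulus K S a (c - \<epsilon>)"
  unfolding pos_lin_indep_modulus_def
proof (intro allI impI)
  fix \<alpha> \<beta> :: "'i \<Rightarrow> real"
  assume nonneg: "\<forall>i\<in>K. 0 \<le> \<alpha> i"
  let ?N = "(\<Sum>i\<in>K. \<alpha> i) + (\<Sum>i\<in>S. \<bar>\<beta> i\<bar>)"
  let ?Fa = "(\<Sum>i\<in>K. \<alpha> i *\<^sub>R a i) + (\<Sum>i\<in>S. \<beta> i *\<^sub>R a i)"
  let ?Fb = "(\<Sum>i\<in>K. \<alpha> i *\<^sub>R b i) + (\<Sum>i\<in>S. \<beta> i *\<^sub>R b i)"
  have "?Fb - ?Fa = (\<Sum>i\<in>K. \<alpha> i *\<^sub>R (b i - a i)) + (\<Sum>i\<in>S. \<beta> i *\<^sub>R (b i - a i))"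
    by (simp add: scaleR_diff_right sum_subtractf algebra_simps)
  also have "norm \<dots> \<le> (\<Sum>i\<in>K. norm (\<alpha> i *\<^sub>R (b i - a i))) + (\<Sum>i\<in>S. norm (\<beta> i *\<^sub>R (b i - a i)))"
    by (intro order.trans[OF norm_triangle_ineq] add_mono norm_sum)
  also have "\<dots> \<le> (\<Sum>i\<in>K. \<alpha> i * \<epsilon>) + (\<Sum>i\<in>S. \<bar>\<beta> i\<bar> * \<epsilon>)"
    using nonneg close by (intro add_mono sum_mono) (auto intro!: mult_left_mono simp: norm_minus_commute)
  also have "\<dots> = \<epsilon> * ?N"
    by (simp add: sum_distrib_left sum_distrib_right algebra_simps)
  finally have "norm (?Fb - ?Fa) \<le> \<epsilon> * ?N" .
  moreover have "c * ?N \<le> norm ?Fb"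
    using mod nonneg unfolding pos_lin_indep_modulus_def by blast
  moreover have "norm ?Fb \<le> norm ?Fa + norm (?Fb - ?Fa)"
    by (rule norm_triangle_sub)
  ultimately show "(c - \<epsilon>) * ?N \<le> norm ?Fa"
    by (simp add: algebra_simps)
qed

lemma not_lin_dep_fam_of_modulus:
  assumes "pos_lin_indep_modulus {} S a c" "c > 0" "finite S"
  shows "\<not> lin_dep_fam S a"
proof
  assume "lin_dep_fam S a"
  then obtain \<beta> where nz: "\<exists>i\<in>S. \<beta> i \<noteq> 0" and comb0: "(\<Sum>i\<in>S. \<beta> i *\<^sub>R a i) = 0"
    unfolding lin_dep_fam_def by blast
  have "c * (\<Sum>i\<in>S. \<bar>\<beta> i\<bar>) \<le> 0"
    using assms(1) comb0 unfolding pos_lin_indep_modulus_def by (metis add_0 empty_iff norm_zero sum.empty)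
  then have "(\<Sum>i\<in>S. \<bar>\<beta> i\<bar>) = 0"
    using \<open>c > 0\<close> by (meson antisym mult_le_0_iff not_less sum_nonneg abs_ge_zero)
  then show False
    using nz \<open>finite S\<close> by (simp add: sum_nonneg_eq_0_iff)
qed

lemma lin_dep_fam_positive_coeff:
  fixes a :: "'i \<Rightarrow> 'v::real_vector"
  assumes fin: "finite K" "finite S" and disj: "K \<inter> S = {}"
    and indep: "\<not> lin_dep_fam S a" and dep: "lin_dep_fam (K \<union> S) a"
  obtains d where "\<exists>i\<in>K. d i > 0" "(\<Sum>i\<in>K. d i *\<^sub>R a i) + (\<Sum>i\<in>S. d i *\<^sub>R a i) = 0"
proof -
  have split: "(\<Sum>i\<in>K \<union> S. c i *\<^sub>R a i) = (\<Sum>i\<in>K. c i *\<^sub>R a i) + (\<Sum>i\<in>S. c i *\<^sub>R a i)" for c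
    using fin disj by (intro sum.union_disjoint) auto
  obtain c where c_nz: "\<exists>i\<in>K \<union> S. c i \<noteq> 0" and c0: "(\<Sum>i\<in>K \<union> S. c i *\<^sub>R a i) = 0"
    using dep unfolding lin_dep_fam_def by blast
  have "\<exists>i\<in>K. c i \<noteq> 0"
  proof (rule ccontr)
    assume "\<not> ?thesis"
    then have "(\<Sum>i\<in>S. c i *\<^sub>R a i) = 0" and "\<exists>i\<in>S. c i \<noteq> 0"
      using c0 c_nz split[of c] by auto
    with indep show False
      unfolding lin_dep_fam_def by blast
  qed
  show thesis
  proof (cases "\<exists>i\<in>K. c i > 0")
    case True
    with c0 split[of c] that show thesis by auto
  next
    case False
    with \<open>\<exists>i\<in>K. c i \<noteq> 0\<close> have "\<exists>i\<in>K. - c i > 0"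
      by force
    have "(\<Sum>i\<in>K. - c i *\<^sub>R a i) + (\<Sum>i\<in>S. - c i *\<^sub>R a i)
        = - ((\<Sum>i\<in>K. c i *\<^sub>R a i) + (\<Sum>i\<in>S. c i *\<^sub>R a i))"
      by (simp add: sum_negf)
    also have "\<dots> = 0"
      using c0 split[of c] by simp
    finally show thesis
      using that[of "\<lambda>i. - c i"] \<open>\<exists>i\<in>K. - c i > 0\<close> by blast
  qed
qed

lemma caratheodory_step:
  fixes a :: "'i \<Rightarrow> 'v::real_vector"
  assumes fin: "finite K" "finite S" and disj: "K \<inter> S = {}"
    and indep: "\<not> lin_dep_fam S a" and dep: "lin_dep_fam (K \<union> S) a"
    and nonneg: "\<forall>i\<in>K. 0 \<le> \<alpha> i"
  obtains i0 \<alpha>' \<beta>' where "i0 \<in> K" "\<forall>i\<in>K - {i0}. 0 \<le> \<alpha>' i"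
    "(\<Sum>i\<in>K. \<alpha> i *\<^sub>R a i) + (\<Sum>i\<in>S. \<beta> i *\<^sub>R a i)
       = (\<Sum>i\<in>K - {i0}. \<alpha>' i *\<^sub>R a i) + (\<Sum>i\<in>S. \<beta>' i *\<^sub>R a i)"
proof -
  obtain d where d_pos: "\<exists>i\<in>K. d i > 0"
    and d0: "(\<Sum>i\<in>K. d i *\<^sub>R a i) + (\<Sum>i\<in>S. d i *\<^sub>R a i) = 0"
    using lin_dep_fam_positive_coeff[OF fin disj indep dep] by blast
  define P where "P = {i\<in>K. d i > 0}"
  have P: "finite P" "P \<noteq> {}"
    using fin d_pos unfolding P_def by auto
  obtain i0 where i0: "i0 \<in> P" and i0_min: "\<And>i. i \<in> P \<Longrightarrow> \<alpha> i0 / d i0 \<le> \<alpha> i / d i"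
    using ex_is_arg_min_if_finite[OF P, of "\<lambda>i. \<alpha> i / d i"] unfolding is_arg_min_def
    by (auto simp: not_less)
  \<comment> \<open>the largest step along \<open>-d\<close> keeping the coefficients on \<open>K\<close> nonnegative; it removes \<open>i0\<close>\<close>
  define \<tau> where "\<tau> = \<alpha> i0 / d i0"
  have \<tau>_nonneg: "\<tau> \<ge> 0"
    using i0 nonneg unfolding \<tau>_def P_def by auto
  define \<alpha>' where "\<alpha>' i = \<alpha> i - \<tau> * d i" for i
  define \<beta>' where "\<beta>' i = \<beta> i - \<tau> * d i" for i
  have "0 \<le> \<alpha>' i" if "i \<in> K" for i
  proof (cases "d i > 0")
    case True
    then have "\<tau> * d i \<le> \<alpha> i"
      using i0_min[of i] that unfolding \<tau>_def P_def by (simp add: le_divide_eq)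
    then show ?thesis
      unfolding \<alpha>'_def by simp
  next
    case False
    then show ?thesis
      using \<tau>_nonneg nonneg that mult_nonneg_nonpos[of \<tau> "d i"] unfolding \<alpha>'_def by auto
  qed
  moreover have "\<alpha>' i0 = 0"
    using i0 unfolding \<alpha>'_def \<tau>_def P_def by auto
  then have "(\<Sum>i\<in>K. \<alpha>' i *\<^sub>R a i) = (\<Sum>i\<in>K - {i0}. \<alpha>' i *\<^sub>R a i)"
    using i0 fin sum.remove[of K i0 "\<lambda>i. \<alpha>' i *\<^sub>R a i"] by (simp add: P_def)
  moreover have "(\<Sum>i\<in>K. \<alpha>' i *\<^sub>R a i) + (\<Sum>i\<in>S. \<beta>' i *\<^sub>R a i)
      = (\<Sum>i\<in>K. \<alpha> i *\<^sub>R a i) + (\<Sum>i\<in>S. \<beta> i *\<^sub>R a i)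
        - \<tau> *\<^sub>R ((\<Sum>i\<in>K. d i *\<^sub>R a i) + (\<Sum>i\<in>S. d i *\<^sub>R a i))"
    unfolding \<alpha>'_def \<beta>'_def
    by (simp add: scaleR_diff_left sum_subtractf scaleR_right.sum algebra_simps)
  ultimately show thesis
    using that[of i0 \<alpha>' \<beta>'] i0 d0 unfolding P_def by auto
qed

lemma caratheodory_reduction:
  fixes a :: "'i \<Rightarrow> 'v::real_vector"
  assumes "finite K" "finite S" "K \<inter> S = {}" "\<not> lin_dep_fam S a" "\<forall>i\<in>K. 0 \<le> \<alpha> i"
  shows "\<exists>K'\<subseteq>K. \<exists>\<alpha>' \<beta>'. (\<forall>i\<in>K'. 0 \<le> \<alpha>' i) \<and> \<not> lin_dep_fam (K' \<union> S) a \<and>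
     (\<Sum>i\<in>K. \<alpha> i *\<^sub>R a i) + (\<Sum>i\<in>S. \<beta> i *\<^sub>R a i) = (\<Sum>i\<in>K'. \<alpha>' i *\<^sub>R a i) + (\<Sum>i\<in>S. \<beta>' i *\<^sub>R a i)"
  using assms
proof (induction "card K" arbitrary: K \<alpha> \<beta> rule: less_induct)
  case less
  show ?case
  proof (cases "lin_dep_fam (K \<union> S) a")
    case False
    with less.prems show ?thesis
      by blast
  next
    case True
    obtain i0 \<alpha>' \<beta>' where i0: "i0 \<in> K" and nonneg: "\<forall>i\<in>K - {i0}. 0 \<le> \<alpha>' i"
      and eq: "(\<Sum>i\<in>K. \<alpha> i *\<^sub>R a i) + (\<Sum>i\<in>S. \<beta> i *\<^sub>R a i)
         = (\<Sum>i\<in>K - {i0}. \<alpha>' i *\<^sub>R a i) + (\<Sum>i\<in>S. \<beta>' i *\<^sub>R a i)"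
      using caratheodory_step[OF less.prems(1-4) True less.prems(5), of \<beta>] by blast
    have "card (K - {i0}) < card K"
      using less.prems(1) i0 by (rule card_Diff1_less)
    moreover have "finite (K - {i0})" "(K - {i0}) \<inter> S = {}"
      using less.prems by auto
    ultimately have "\<exists>K'\<subseteq>K - {i0}. \<exists>\<alpha>'' \<beta>''. (\<forall>i\<in>K'. 0 \<le> \<alpha>'' i) \<and> \<not> lin_dep_fam (K' \<union> S) a \<and>
        (\<Sum>i\<in>K - {i0}. \<alpha>' i *\<^sub>R a i) + (\<Sum>i\<in>S. \<beta>' i *\<^sub>R a i)
          = (\<Sum>i\<in>K'. \<alpha>'' i *\<^sub>R a i) + (\<Sum>i\<in>S. \<beta>'' i *\<^sub>R a i)"
      using less.prems(2,4) nonneg by (intro less.hyps) auto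
    then obtain K' \<alpha>'' \<beta>'' where K': "K' \<subseteq> K - {i0}" "\<forall>i\<in>K'. 0 \<le> \<alpha>'' i"
      "\<not> lin_dep_fam (K' \<union> S) a"
      "(\<Sum>i\<in>K - {i0}. \<alpha>' i *\<^sub>R a i) + (\<Sum>i\<in>S. \<beta>' i *\<^sub>R a i)
         = (\<Sum>i\<in>K'. \<alpha>'' i *\<^sub>R a i) + (\<Sum>i\<in>S. \<beta>'' i *\<^sub>R a i)"
      by blast
    show ?thesis
      using K' eq by (intro exI[of _ K'] exI[of _ \<alpha>''] exI[of _ \<beta>'']) auto
  qed
qed

lemma not_lin_dep_famD:
  fixes a :: "'i \<Rightarrow> 'v::euclidean_space"
  assumes fin: "finite S" and indep: "\<not> lin_dep_fam S a"
  shows "inj_on a S" "independent (a ` S)" "dim (a ` S) = card S"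
proof -
  show inj: "inj_on a S"
  proof (rule inj_onI, rule ccontr)
    fix i j
    assume ij: "i \<in> S" "j \<in> S" "a i = a j" "i \<noteq> j"
    define c where "c k = (if k = i then 1 else 0) - (if k = j then 1 else (0::real))" for k
    have "(\<Sum>k\<in>S. c k *\<^sub>R a k) = (\<Sum>k\<in>S. (if k = i then a k else 0) - (if k = j then a k else 0))"
      by (rule sum.cong) (auto simp: c_def ij(4))
    also have "\<dots> = (\<Sum>k\<in>S. (if k = i then a k else 0)) - (\<Sum>k\<in>S. (if k = j then a k else 0))"
      by (rule sum_subtractf)
    also have "\<dots> = 0"
      using ij fin by (simp add: sum.delta')
    finally have "(\<Sum>k\<in>S. c k *\<^sub>R a k) = 0" .
    moreover have "c i \<noteq> 0"
      using ij by (simp add: c_def)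
    ultimately show False
      using indep ij unfolding lin_dep_fam_def by blast
  qed
  show ind: "independent (a ` S)"
  proof
    assume "dependent (a ` S)"
    then obtain u where u: "\<exists>v\<in>a ` S. u v \<noteq> 0" "(\<Sum>v\<in>a ` S. u v *\<^sub>R v) = 0"
      using dependent_finite[of "a ` S"] fin by auto
    have "(\<Sum>s\<in>S. u (a s) *\<^sub>R a s) = 0"
      using u(2) sum.reindex[OF inj, of "\<lambda>v. u v *\<^sub>R v"] by simp
    moreover obtain s where "s \<in> S" "u (a s) \<noteq> 0"
      using u(1) by blast
    ultimately have "lin_dep_fam S a"
      unfolding lin_dep_fam_def by (intro exI[of _ "\<lambda>s. u (a s)"]) auto
    with indep show False ..
  qed
  show "dim (a ` S) = card S"
    using dim_eq_card_independent[OF ind] card_image[OF inj] by simp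
qed

lemma sum_eq_sum_over_rank_basis:
  fixes a :: "'i \<Rightarrow> 'v::euclidean_space"
  assumes "finite J" "S \<subseteq> J" and indep: "\<not> lin_dep_fam S a" and rank: "dim (a ` J) = card S"
  obtains \<beta> where "(\<Sum>j\<in>J. \<mu> j *\<^sub>R a j) = (\<Sum>s\<in>S. \<beta> s *\<^sub>R a s)"
proof -
  have fin: "finite S"
    using assms(1,2) finite_subset by blast
  note S_basis = not_lin_dep_famD[OF fin indep]
  have "span (a ` S) = span (a ` J)"
  proof (rule subspace_dim_equal)
    show "span (a ` S) \<subseteq> span (a ` J)"
      using assms(2) by (intro span_mono) auto
    show "dim (span (a ` J)) \<le> dim (span (a ` S))"
      using S_basis rank by simp
  qed (auto intro: subspace_span)
  moreover have "(\<Sum>j\<in>J. \<mu> j *\<^sub>R a j) \<in> span (a ` J)"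
    by (intro span_sum span_scale span_base) auto
  ultimately have "(\<Sum>j\<in>J. \<mu> j *\<^sub>R a j) \<in> range (\<lambda>u. \<Sum>v\<in>a ` S. u v *\<^sub>R v)"
    using span_finite[of "a ` S"] fin by simp
  then obtain u where "(\<Sum>v\<in>a ` S. u v *\<^sub>R v) = (\<Sum>j\<in>J. \<mu> j *\<^sub>R a j)"
    by (auto simp: image_iff)
  then show thesis
    using that[of "\<lambda>s. u (a s)"] sum.reindex[OF S_basis(1), of "\<lambda>v. u v *\<^sub>R v"] by simp
qed

lemma inner_comb_le:
  fixes a :: "'i \<Rightarrow> 'v::real_inner"
  assumes "\<forall>i\<in>K. 0 \<le> \<alpha> i" "\<forall>i\<in>K. a i \<bullet> u \<le> B" "\<forall>i\<in>S. \<bar>a i \<bullet> u\<bar> \<le> B"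
  shows "((\<Sum>i\<in>K. \<alpha> i *\<^sub>R a i) + (\<Sum>i\<in>S. \<beta> i *\<^sub>R a i)) \<bullet> u \<le> ((\<Sum>i\<in>K. \<alpha> i) + (\<Sum>i\<in>S. \<bar>\<beta> i\<bar>)) * B"
proof -
  have "\<beta> i * (a i \<bullet> u) \<le> \<bar>\<beta> i\<bar> * B" if "i \<in> S" for i
  proof -
    have "\<beta> i * (a i \<bullet> u) \<le> \<bar>\<beta> i\<bar> * \<bar>a i \<bullet> u\<bar>"
      by (simp flip: abs_mult)
    also have "\<dots> \<le> \<bar>\<beta> i\<bar> * B"
      using assms(3) that by (intro mult_left_mono) auto
    finally show ?thesis .
  qed
  then have "(\<Sum>i\<in>K. \<alpha> i * (a i \<bullet> u)) + (\<Sum>i\<in>S. \<beta> i * (a i \<bullet> u)) \<le> (\<Sum>i\<in>K. \<alpha> i * B) + (\<Sum>i\<in>S. \<bar>\<beta> i\<bar> * B)"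
    using assms(1,2) by (intro add_mono sum_mono) (auto intro: mult_left_mono)
  then show ?thesis
    by (simp add: inner_add_left inner_sum_left sum_distrib_right distrib_right)
qed

section \<open>Penalised projection onto the feasible set\<close>

definition pos_sq :: "real \<Rightarrow> real" where
  "pos_sq u = (max u 0)\<^sup>2"

lemma has_real_derivative_pos_sq: "(pos_sq has_real_derivative 2 * max u 0) (at u)"
proof -
  consider "u < 0" | "u = 0" | "u > 0"
    by linarith
  then show ?thesis
  proof cases
    case 1
    have "((\<lambda>_. 0) has_real_derivative 2 * max u 0) (at u)"
      using 1 by simp
    then show ?thesis
      by (rule has_field_derivative_transform_within_open[where S="{..<0}"]) (use 1 in \<open>auto simp: pos_sq_def\<close>)
  next
    case 2
    have "((\<lambda>y. (pos_sq y - pos_sq 0) / (y - 0)) \<longlongrightarrow> 0) (at 0)"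
    proof (rule Lim_null_comparison)
      show "\<forall>\<^sub>F y in at 0. norm ((pos_sq y - pos_sq 0) / (y - 0)) \<le> \<bar>y\<bar>"
      proof (intro always_eventually allI)
        fix y :: real
        show "norm ((pos_sq y - pos_sq 0) / (y - 0)) \<le> \<bar>y\<bar>"
          by (cases "y > 0") (auto simp: pos_sq_def power2_eq_square abs_mult)
      qed
      show "((\<lambda>y::real. \<bar>y\<bar>) \<longlongrightarrow> 0) (at 0)"
        using tendsto_rabs_zero[OF tendsto_ident_at[of 0 UNIV]] by simp
    qed
    then show ?thesis
      using 2 by (simp add: has_field_derivative_iff)
  next
    case 3
    have "((\<lambda>y. y\<^sup>2) has_real_derivative 2 * max u 0) (at u)"
      using 3 by (auto intro!: derivative_eq_intros)
    then show ?thesis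
      by (rule has_field_derivative_transform_within_open[where S="{0<..}"]) (use 3 in \<open>auto simp: pos_sq_def\<close>)
  qed
qed

definition infeasibility ::
  "(nat \<Rightarrow> (real^'n) \<times> (real^'m) \<Rightarrow> real) \<Rightarrow> nat \<Rightarrow> nat \<Rightarrow> real^'n \<Rightarrow> real^'m \<Rightarrow> real" where
  "infeasibility h l p x y = (\<Sum>i\<in>idxI l. pos_sq (h i (x, y))) + (\<Sum>j\<in>idxJ l p. (h j (x, y))\<^sup>2)"

lemma infeasibility_nonneg: "infeasibility h l p x y \<ge> 0"
  unfolding infeasibility_def pos_sq_def by (intro add_nonneg_nonneg sum_nonneg) auto

lemma infeasibility_eq_0_iff: "infeasibility h l p x y = 0 \<longleftrightarrow> y \<in> feas h l p x"
proof -
  have "finite (idxI l)" "finite (idxJ l p)"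
    by (simp_all add: idxI_def idxJ_def)
  then have "infeasibility h l p x y = 0 \<longleftrightarrow>
      (\<forall>i\<in>idxI l. pos_sq (h i (x, y)) = 0) \<and> (\<forall>j\<in>idxJ l p. (h j (x, y))\<^sup>2 = 0)"
    unfolding infeasibility_def pos_sq_def
    by (simp add: add_nonneg_eq_0_iff sum_nonneg sum_nonneg_eq_0_iff)
  then show ?thesis
    unfolding feas_def pos_sq_def by (simp add: max_def)
qed

lemma idx_subset: "l \<le> p \<Longrightarrow> idxI l \<union> idxJ l p = {1..p}"
  by (auto simp: idxI_def idxJ_def)

lemma continuous_on_infeasibility:
  assumes "l \<le> p" "\<forall>i\<in>{1..p}. C1_fun (h i)"
  shows "continuous_on UNIV (infeasibility h l p x)"
proof -
  have "continuous_on UNIV (\<lambda>y. h i (x, y))" if "i \<in> idxI l \<union> idxJ l p" for i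
    using assms(2) idx_subset[OF assms(1)] that by (blast intro: C1_fun_continuous_slice)
  then show ?thesis
    unfolding infeasibility_def[abs_def] pos_sq_def by (auto intro!: continuous_intros)
qed

lemma has_derivative_infeasibility:
  assumes "l \<le> p" "\<forall>i\<in>{1..p}. C1_fun (h i)"
  shows "(infeasibility h l p x has_derivative
      (\<lambda>v. (\<Sum>i\<in>idxI l. 2 * max (h i (x, y)) 0 * (grad_y (h i) x y \<bullet> v))
         + (\<Sum>j\<in>idxJ l p. 2 * h j (x, y) * (grad_y (h j) x y \<bullet> v)))) (at y)"
proof -
  have grad: "((\<lambda>y. h i (x, y)) has_derivative (\<lambda>v. grad_y (h i) x y \<bullet> v)) (at y)"
    if "i \<in> idxI l \<union> idxJ l p" for i
    using assms(2) idx_subset[OF assms(1)] that by (blast intro: has_derivative_grad_y)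
  have "((\<lambda>y. pos_sq (h i (x, y))) has_derivative (\<lambda>v. 2 * max (h i (x, y)) 0 * (grad_y (h i) x y \<bullet> v))) (at y)"
    if "i \<in> idxI l" for i
    using has_derivative_compose[OF grad has_real_derivative_pos_sq[unfolded has_field_derivative_def]] that
    by auto
  moreover have "((\<lambda>y. (h j (x, y))\<^sup>2) has_derivative (\<lambda>v. 2 * h j (x, y) * (grad_y (h j) x y \<bullet> v))) (at y)"
    if "j \<in> idxJ l p" for j
    using that by (auto intro!: derivative_eq_intros grad)
  ultimately show ?thesis
    unfolding infeasibility_def[abs_def] by (intro has_derivative_add has_derivative_sum) auto
qed

lemma closed_feas:
  assumes "l \<le> p" "\<forall>i\<in>{1..p}. C1_fun (h i)"
  shows "closed (feas h l p x)"
proof -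
  have "feas h l p x = infeasibility h l p x -` {0}"
    by (auto simp: infeasibility_eq_0_iff)
  then show ?thesis
    using continuous_closed_vimage[OF closed_singleton] continuous_on_infeasibility[OF assms]
    by (metis continuous_on_eq_continuous_within iso_tuple_UNIV_I)
qed

definition prox_penalty :: "'a::real_inner \<Rightarrow> 'a \<Rightarrow> ('a \<Rightarrow> real) \<Rightarrow> real \<Rightarrow> 'a \<Rightarrow> real" where
  "prox_penalty y z V \<rho> w = (w - y) \<bullet> (w - y) + (w - z) \<bullet> (w - z) + \<rho> * V w"

lemma prox_penalty_minimizer_exists:
  fixes V :: "'a::euclidean_space \<Rightarrow> real"
  assumes V: "continuous_on UNIV V" "\<And>w. V w \<ge> 0" "V z = 0" and "\<rho> \<ge> 0"
  obtains w0 where "w0 \<in> cball z (dist y z)" "\<And>w. prox_penalty y z V \<rho> w0 \<le> prox_penalty y z V \<rho> w"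
proof -
  let ?Q = "prox_penalty y z V \<rho>"
  have Qz: "?Q z = (dist y z)\<^sup>2"
    using V(3) by (simp add: prox_penalty_def dist_norm power2_norm_eq_inner[symmetric] norm_minus_commute)
  have Q_ge: "(norm (w - z))\<^sup>2 \<le> ?Q w" for w
    using V(2)[of w] \<open>\<rho> \<ge> 0\<close> by (simp add: prox_penalty_def power2_norm_eq_inner)
  have "continuous_on (cball z (dist y z)) ?Q"
    unfolding prox_penalty_def by (intro continuous_intros continuous_on_subset[OF V(1)]) auto
  then obtain w0 where w0: "w0 \<in> cball z (dist y z)" "\<forall>w\<in>cball z (dist y z). ?Q w0 \<le> ?Q w"
    using continuous_attains_inf[of "cball z (dist y z)" ?Q] by auto
  have "?Q w0 \<le> ?Q w" for w
  proof (cases "w \<in> cball z (dist y z)")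
    case False
    then have "(dist y z)\<^sup>2 < (norm (w - z))\<^sup>2"
      by (intro power_strict_mono) (auto simp: dist_norm norm_minus_commute)
    then show ?thesis
      using w0(2)[rule_format, of z] Qz Q_ge[of w] by auto
  qed (use w0 in auto)
  with w0(1) show thesis
    using that by blast
qed

lemma prox_penalty_minimizers_limit:
  fixes V :: "'a::euclidean_space \<Rightarrow> real"
  assumes V: "continuous_on UNIV V" "\<And>w. V w \<ge> 0" "V z = 0"
    and proj: "\<And>w. V w = 0 \<Longrightarrow> dist y z \<le> dist y w"
    and W_min: "\<And>n w. prox_penalty y z V (Suc n) (W n) \<le> prox_penalty y z V (Suc n) w"
    and r: "strict_mono r" and lim: "(W \<circ> r) \<longlonglongrightarrow> l"
  shows "l = z"
proof -
  let ?d = "dist y z"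
  have W_le: "prox_penalty y z V (Suc n) (W n) \<le> ?d\<^sup>2" for n
    using W_min[of n z] V(3) by (simp add: prox_penalty_def dist_norm power2_norm_eq_inner[symmetric] norm_minus_commute)
  have V_bound: "V (W n) \<le> ?d\<^sup>2 / Suc n" for n
  proof -
    have "Suc n * V (W n) \<le> ?d\<^sup>2"
      using W_le[of n] inner_ge_zero[of "W n - y"] inner_ge_zero[of "W n - z"]
      unfolding prox_penalty_def by linarith
    then show ?thesis
      by (simp add: field_simps)
  qed
  have "(\<lambda>n. V (W (r n))) \<longlonglongrightarrow> 0"
  proof (rule Lim_null_comparison)
    show "\<forall>\<^sub>F n in sequentially. norm (V (W (r n))) \<le> ?d\<^sup>2 * inverse (Suc (r n))"
      using V_bound V(2) by (intro always_eventually allI) (simp add: divide_inverse)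
    have "(\<lambda>n. inverse (real (Suc (r n)))) \<longlonglongrightarrow> 0"
      using LIMSEQ_subseq_LIMSEQ[OF LIMSEQ_inverse_real_of_nat r] by (simp add: o_def)
    then show "(\<lambda>n. ?d\<^sup>2 * inverse (real (Suc (r n)))) \<longlonglongrightarrow> 0"
      by (rule tendsto_mult_right_zero)
  qed
  moreover have "(\<lambda>n. V (W (r n))) \<longlonglongrightarrow> V l"
    using continuous_on_tendsto_compose[OF V(1) lim] by (simp add: o_def)
  ultimately have "V l = 0"
    using LIMSEQ_unique by blast
  have "(W (r n) - y) \<bullet> (W (r n) - y) + (W (r n) - z) \<bullet> (W (r n) - z) \<le> ?d\<^sup>2" for n
    using W_le[of "r n"] mult_nonneg_nonneg[OF of_nat_0_le_iff[of "Suc (r n)"] V(2)[of "W (r n)"]]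
    unfolding prox_penalty_def by linarith
  moreover have "(\<lambda>n. (W (r n) - y) \<bullet> (W (r n) - y) + (W (r n) - z) \<bullet> (W (r n) - z))
      \<longlonglongrightarrow> (l - y) \<bullet> (l - y) + (l - z) \<bullet> (l - z)"
    using lim unfolding o_def by (intro tendsto_intros)
  ultimately have "(l - y) \<bullet> (l - y) + (l - z) \<bullet> (l - z) \<le> ?d\<^sup>2"
    by (intro LIMSEQ_le_const2) auto
  \<comment> \<open>\<open>l\<close> is a zero of \<open>V\<close>, so it is no closer to \<open>y\<close> than \<open>z\<close>; this forces \<open>l = z\<close>\<close>
  moreover have "?d\<^sup>2 \<le> (l - y) \<bullet> (l - y)"
    using proj[OF \<open>V l = 0\<close>]
    by (simp add: dist_norm power2_norm_eq_inner[symmetric] norm_minus_commute power_mono)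
  ultimately have "(l - z) \<bullet> (l - z) \<le> 0"
    by linarith
  then show "l = z"
    by (metis inner_gt_zero_iff not_le right_minus_eq)
qed

lemma prox_penalty_minimizer_near:
  fixes V :: "'a::euclidean_space \<Rightarrow> real"
  assumes V: "continuous_on UNIV V" "\<And>w. V w \<ge> 0" "V z = 0"
    and proj: "\<And>w. V w = 0 \<Longrightarrow> dist y z \<le> dist y w" and "\<eta> > 0"
  obtains \<rho> w0 where "\<rho> > 0" "dist w0 z \<le> \<eta>" "\<And>w. prox_penalty y z V \<rho> w0 \<le> prox_penalty y z V \<rho> w"
proof (rule ccontr)
  assume far: "\<not> thesis"
  have "\<exists>w0\<in>cball z (dist y z). \<forall>w. prox_penalty y z V (Suc n) w0 \<le> prox_penalty y z V (Suc n) w" for n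
    using prox_penalty_minimizer_exists[OF V, of "Suc n" y] by (metis of_nat_0_le_iff)
  then obtain W where W_in: "\<And>n. W n \<in> cball z (dist y z)"
    and W_min: "\<And>n w. prox_penalty y z V (Suc n) (W n) \<le> prox_penalty y z V (Suc n) w"
    by metis
  have W_far: "dist (W n) z > \<eta>" for n
  proof (rule ccontr)
    assume "\<not> ?thesis"
    then have "dist (W n) z \<le> \<eta>"
      by simp
    from that[of "Suc n" "W n", OF _ this W_min] far show False
      by simp
  qed
  obtain l r where r: "strict_mono r" and lim: "(W \<circ> r) \<longlonglongrightarrow> l"
    using compact_imp_seq_compact[OF compact_cball] W_in unfolding seq_compact_def by metis
  then have "l = z"
    using prox_penalty_minimizers_limit[OF V proj W_min] by blast
  then have "eventually (\<lambda>n. dist (W (r n)) z < \<eta>) sequentially"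
    using lim \<open>\<eta> > 0\<close> unfolding o_def tendsto_iff by blast
  with W_far show False
    unfolding eventually_sequentially by (meson le_refl less_asym)
qed

lemma prox_penalty_minimizer_stationary:
  assumes "l \<le> p" "\<forall>i\<in>{1..p}. C1_fun (h i)"
    and min: "\<And>w. prox_penalty y z (infeasibility h l p x) \<rho> w0 \<le> prox_penalty y z (infeasibility h l p x) \<rho> w"
  shows "(y - w0) + (z - w0) = (\<Sum>i\<in>idxI l. (\<rho> * max (h i (x, w0)) 0) *\<^sub>R grad_y (h i) x w0)
           + (\<Sum>j\<in>idxJ l p. (\<rho> * h j (x, w0)) *\<^sub>R grad_y (h j) x w0)"
proof -
  define G where "G = (\<Sum>i\<in>idxI l. (\<rho> * max (h i (x, w0)) 0) *\<^sub>R grad_y (h i) x w0)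
           + (\<Sum>j\<in>idxJ l p. (\<rho> * h j (x, w0)) *\<^sub>R grad_y (h j) x w0)"
  define E where "E = (w0 - y) + (w0 - z) + G"
  have G_inner: "G \<bullet> v = \<rho> * ((\<Sum>i\<in>idxI l. max (h i (x, w0)) 0 * (grad_y (h i) x w0 \<bullet> v))
      + (\<Sum>j\<in>idxJ l p. h j (x, w0) * (grad_y (h j) x w0 \<bullet> v)))" for v
    by (simp add: G_def inner_add_left inner_sum_left sum_distrib_left distrib_left mult.assoc)
  have "(prox_penalty y z (infeasibility h l p x) \<rho> has_derivative (\<lambda>v. 2 * (E \<bullet> v))) (at w0)"
    unfolding prox_penalty_def[abs_def]
  proof (rule has_derivative_eq_rhs)
    show "((\<lambda>w. (w - y) \<bullet> (w - y) + (w - z) \<bullet> (w - z) + \<rho> * infeasibility h l p x w) has_derivative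
      (\<lambda>v. ((w0 - y) \<bullet> v + v \<bullet> (w0 - y)) + ((w0 - z) \<bullet> v + v \<bullet> (w0 - z)) + \<rho> *
         ((\<Sum>i\<in>idxI l. 2 * max (h i (x, w0)) 0 * (grad_y (h i) x w0 \<bullet> v))
           + (\<Sum>j\<in>idxJ l p. 2 * h j (x, w0) * (grad_y (h j) x w0 \<bullet> v))))) (at w0)"
      by (intro has_derivative_add has_derivative_mult_right has_derivative_infeasibility[OF assms(1,2)]
          has_derivative_inner) (auto intro!: derivative_eq_intros)
    have "E \<bullet> v = (w0 - y) \<bullet> v + (w0 - z) \<bullet> v + G \<bullet> v" for v
      by (simp only: E_def inner_add_left)
    then show "(\<lambda>v. ((w0 - y) \<bullet> v + v \<bullet> (w0 - y)) + ((w0 - z) \<bullet> v + v \<bullet> (w0 - z)) + \<rho> *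
         ((\<Sum>i\<in>idxI l. 2 * max (h i (x, w0)) 0 * (grad_y (h i) x w0 \<bullet> v))
           + (\<Sum>j\<in>idxJ l p. 2 * h j (x, w0) * (grad_y (h j) x w0 \<bullet> v)))) = (\<lambda>v. 2 * (E \<bullet> v))"
      by (simp add: fun_eq_iff G_inner inner_commute[of _ "w0 - y"] inner_commute[of _ "w0 - z"]
          sum_distrib_left[symmetric] mult.assoc distrib_left)
  qed
  then have "(\<lambda>v. 2 * (E \<bullet> v)) = (\<lambda>v. 0)"
    by (rule differential_zero_maxmin[OF UNIV_I open_UNIV]) (use min in auto)
  then have "E = 0"
    by (metis inner_eq_zero_iff mult_eq_0_iff zero_neq_numeral)
  then show ?thesis
    unfolding E_def G_def[symmetric] by (simp add: algebra_simps eq_neg_iff_add_eq_0)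
qed

lemma approximate_KKT_point:
  fixes h :: "nat \<Rightarrow> (real^'n) \<times> (real^'m) \<Rightarrow> real"
  assumes "l \<le> p" "\<forall>i\<in>{1..p}. C1_fun (h i)"
    and z: "z \<in> feas h l p x" and proj: "\<forall>w\<in>feas h l p x. dist y z \<le> dist y w" and "\<eta> > 0"
  obtains \<rho> w0 where "\<rho> > 0" "dist w0 z \<le> \<eta>"
    "(y - w0) + (z - w0) = (\<Sum>i\<in>idxI l. (\<rho> * max (h i (x, w0)) 0) *\<^sub>R grad_y (h i) x w0)
       + (\<Sum>j\<in>idxJ l p. (\<rho> * h j (x, w0)) *\<^sub>R grad_y (h j) x w0)"
proof -
  obtain \<rho> w0 where "\<rho> > 0" "dist w0 z \<le> \<eta>"
    "\<And>w. prox_penalty y z (infeasibility h l p x) \<rho> w0 \<le> prox_penalty y z (infeasibility h l p x) \<rho> w"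
    using prox_penalty_minimizer_near[OF continuous_on_infeasibility[OF assms(1,2)] infeasibility_nonneg]
      z proj \<open>\<eta> > 0\<close> by (metis infeasibility_eq_0_iff)
  with prox_penalty_minimizer_stationary[OF assms(1,2)] show thesis
    using that by blast
qed

section \<open>Consequences of RCPLD near a feasible point\<close>

lemma eventually_nhds_dist_continuous:
  fixes f :: "'a::metric_space \<Rightarrow> 'b::metric_space"
  assumes "continuous_on UNIV f" "e > 0"
  shows "eventually (\<lambda>q. dist (f q) (f a) < e) (nhds a)"
proof -
  obtain d where "d > 0" "\<And>q. dist q a < d \<Longrightarrow> dist (f q) (f a) < e"
    using assms unfolding continuous_on_iff by blast
  then show ?thesis
    by (auto simp: eventually_nhds_metric)
qed

lemma uniform_pos_lin_indep_modulus:
  fixes b :: "'i \<Rightarrow> 'v::real_normed_vector"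
  assumes "finite A" "finite S"
  obtains c where "c > 0" "\<And>K. K \<subseteq> A \<Longrightarrow> \<not> pos_lin_dep K b S b \<Longrightarrow> pos_lin_indep_modulus K S b c"
proof -
  have "\<exists>c>0. \<not> pos_lin_dep K b S b \<longrightarrow> pos_lin_indep_modulus K S b c" if "K \<in> Pow A" for K
  proof (cases "pos_lin_dep K b S b")
    case False
    moreover have "finite K"
      using that assms(1) finite_subset by auto
    ultimately show ?thesis
      using pos_lin_indep_modulus_exists[of K S b] assms(2) by auto
  qed (auto intro: exI[of _ 1])
  then obtain C where C: "\<And>K. K \<in> Pow A \<Longrightarrow> C K > 0 \<and> (\<not> pos_lin_dep K b S b \<longrightarrow> pos_lin_indep_modulus K S b (C K))"
    by metis
  show thesis
  proof
    show "Min (C ` Pow A) > 0"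
      using C assms(1) by (subst Min_gr_iff) auto
    show "pos_lin_indep_modulus K S b (Min (C ` Pow A))"
      if "K \<subseteq> A" "\<not> pos_lin_dep K b S b" for K
      using C[of K] that assms(1) by (auto intro: pos_lin_indep_modulus_mono)
  qed
qed

lemma RCPLD_neighbourhood:
  fixes h :: "nat \<Rightarrow> (real^'n) \<times> (real^'m) \<Rightarrow> real"
  assumes "l \<le> p" and C1: "\<forall>i\<in>{1..p}. C1_fun (h i)" and "RCPLD h l p xb yb"
  obtains c r S where "c > 0" "r > 0" "S \<subseteq> idxJ l p"
    "\<And>x y. (x, y) \<in> ball (xb, yb) r \<Longrightarrow> \<not> lin_dep_fam S (\<lambda>i. grad_y (h i) x y)"
    "\<And>x y. (x, y) \<in> ball (xb, yb) r \<Longrightarrow> dim ((\<lambda>i. grad_y (h i) x y) ` idxJ l p) = card S"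
    "\<And>x y K. (x, y) \<in> ball (xb, yb) r \<Longrightarrow> K \<subseteq> active_set h l xb yb \<Longrightarrow>
       \<not> lin_dep_fam (K \<union> S) (\<lambda>i. grad_y (h i) x y) \<Longrightarrow> pos_lin_indep_modulus K S (\<lambda>i. grad_y (h i) x y) c"
proof -
  define A where "A = active_set h l xb yb"
  define b where "b i = grad_y (h i) xb yb" for i
  obtain U S where U: "open U" "(xb, yb) \<in> U" and SJ: "S \<subseteq> idxJ l p"
    and S_indep: "\<not> lin_dep_fam S b" and S_span: "span (b ` S) = span (b ` idxJ l p)"
    and rank: "\<forall>(x, y)\<in>U. dim ((\<lambda>i. grad_y (h i) x y) ` idxJ l p) = dim (b ` idxJ l p)"
    and pos_dep: "\<forall>K\<subseteq>A. pos_lin_dep K b S b \<longrightarrow> (\<forall>(x, y)\<in>U. lin_dep_fam (K \<union> S) (\<lambda>i. grad_y (h i) x y))"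
    using assms(3) unfolding RCPLD_def A_def b_def by blast
  have fin: "finite A" "finite S"
    using SJ by (auto simp: A_def active_set_def idxI_def idxJ_def intro: finite_subset)
  have AS: "A \<union> S \<subseteq> {1..p}"
    using SJ \<open>l \<le> p\<close> by (auto simp: A_def active_set_def idxI_def idxJ_def)
  obtain c where c: "c > 0" "\<And>K. K \<subseteq> A \<Longrightarrow> \<not> pos_lin_dep K b S b \<Longrightarrow> pos_lin_indep_modulus K S b c"
    using uniform_pos_lin_indep_modulus[OF fin] by blast
  have "eventually (\<lambda>q. q \<in> U) (nhds (xb, yb))"
    using U by (rule eventually_nhds_in_open)
  moreover have "eventually (\<lambda>q. \<forall>i\<in>A \<union> S. dist (grad_y (h i) (fst q) (snd q)) (b i) < c / 2) (nhds (xb, yb))"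
    using AS C1 eventually_nhds_dist_continuous[OF continuous_on_grad_y, of _ "c / 2" "(xb, yb)"] \<open>c > 0\<close>
    by (intro eventually_ball_finite) (use fin in \<open>auto simp: b_def case_prod_beta\<close>)
  ultimately have "eventually (\<lambda>q. q \<in> U \<and> (\<forall>i\<in>A \<union> S. dist (grad_y (h i) (fst q) (snd q)) (b i) < c / 2))
      (nhds (xb, yb))"
    by (rule eventually_conj)
  then obtain r where "r > 0"
    and r: "\<And>q. dist q (xb, yb) < r \<Longrightarrow> q \<in> U \<and> (\<forall>i\<in>A \<union> S. dist (grad_y (h i) (fst q) (snd q)) (b i) < c / 2)"
    unfolding eventually_nhds_metric by blast
  show thesis
  proof
    fix x y
    assume xy: "(x, y) \<in> ball (xb, yb) r"
    then have close: "\<forall>i\<in>A \<union> S. norm (grad_y (h i) x y - b i) \<le> c - c / 2" and "(x, y) \<in> U"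
      using r[of "(x, y)"] by (auto simp: dist_commute dist_norm norm_minus_commute less_imp_le)
    have modulus: "pos_lin_indep_modulus K S (\<lambda>i. grad_y (h i) x y) (c / 2)"
      if "K \<subseteq> A" "\<not> pos_lin_dep K b S b" for K
    proof -
      have "pos_lin_indep_modulus K S (\<lambda>i. grad_y (h i) x y) (c - c / 2)"
        using close that(1) by (intro pos_lin_indep_modulus_perturb[OF c(2)[OF that]]) auto
      then show ?thesis
        by simp
    qed
    have "\<not> pos_lin_dep {} b S b"
      using S_indep by (simp add: pos_lin_dep_def lin_dep_fam_def)
    then show "\<not> lin_dep_fam S (\<lambda>i. grad_y (h i) x y)"
      using not_lin_dep_fam_of_modulus[OF modulus[of "{}"]] \<open>c > 0\<close> fin(2) by simp
    show "dim ((\<lambda>i. grad_y (h i) x y) ` idxJ l p) = card S"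
      using rank \<open>(x, y) \<in> U\<close> span_eq_dim[OF S_span] not_lin_dep_famD(3)[OF fin(2) S_indep] by auto
    \<comment> \<open>condition (iii) of RCPLD, read contrapositively\<close>
    show "pos_lin_indep_modulus K S (\<lambda>i. grad_y (h i) x y) (c / 2)"
      if "K \<subseteq> active_set h l xb yb" "\<not> lin_dep_fam (K \<union> S) (\<lambda>i. grad_y (h i) x y)" for K
      using modulus pos_dep that \<open>(x, y) \<in> U\<close> unfolding A_def by blast
  qed (use \<open>c > 0\<close> \<open>r > 0\<close> SJ in auto)
qed

lemma RCPLD_multiplier_bound:
  fixes h :: "nat \<Rightarrow> (real^'n) \<times> (real^'m) \<Rightarrow> real"
  assumes "l \<le> p" "\<forall>i\<in>{1..p}. C1_fun (h i)" "RCPLD h l p xb yb"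
  obtains c r S where "c > 0" "r > 0" "S \<subseteq> idxJ l p"
    "\<And>x y \<theta> \<mu>. (x, y) \<in> ball (xb, yb) r \<Longrightarrow> \<forall>i\<in>idxI l. 0 \<le> \<theta> i \<Longrightarrow>
       \<forall>i\<in>idxI l. 0 < \<theta> i \<longrightarrow> i \<in> active_set h l xb yb \<Longrightarrow>
       \<exists>K \<alpha> \<beta>. K \<subseteq> {i\<in>idxI l. 0 < \<theta> i} \<and> (\<forall>i\<in>K. 0 \<le> \<alpha> i) \<and>
         pos_lin_indep_modulus K S (\<lambda>i. grad_y (h i) x y) c \<and>
         (\<Sum>i\<in>idxI l. \<theta> i *\<^sub>R grad_y (h i) x y) + (\<Sum>j\<in>idxJ l p. \<mu> j *\<^sub>R grad_y (h j) x y)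
           = (\<Sum>i\<in>K. \<alpha> i *\<^sub>R grad_y (h i) x y) + (\<Sum>i\<in>S. \<beta> i *\<^sub>R grad_y (h i) x y)"
proof -
  obtain c r S where "c > 0" "r > 0" and SJ: "S \<subseteq> idxJ l p"
    and S_indep: "\<And>x y. (x, y) \<in> ball (xb, yb) r \<Longrightarrow> \<not> lin_dep_fam S (\<lambda>i. grad_y (h i) x y)"
    and rank: "\<And>x y. (x, y) \<in> ball (xb, yb) r \<Longrightarrow> dim ((\<lambda>i. grad_y (h i) x y) ` idxJ l p) = card S"
    and modulus: "\<And>x y K. (x, y) \<in> ball (xb, yb) r \<Longrightarrow> K \<subseteq> active_set h l xb yb \<Longrightarrow>
       \<not> lin_dep_fam (K \<union> S) (\<lambda>i. grad_y (h i) x y) \<Longrightarrow> pos_lin_indep_modulus K S (\<lambda>i. grad_y (h i) x y) c"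
    using RCPLD_neighbourhood[OF assms] by blast
  have fin: "finite (idxI l)" "finite (idxJ l p)" "finite S" and disj: "idxI l \<inter> S = {}"
    using SJ by (auto simp: idxI_def idxJ_def intro: finite_subset)
  show thesis
  proof (rule that[OF \<open>c > 0\<close> \<open>r > 0\<close> SJ])
    fix x y and \<theta> \<mu> :: "nat \<Rightarrow> real"
    assume xy: "(x, y) \<in> ball (xb, yb) r" and nonneg: "\<forall>i\<in>idxI l. 0 \<le> \<theta> i"
      and active: "\<forall>i\<in>idxI l. 0 < \<theta> i \<longrightarrow> i \<in> active_set h l xb yb"
    define g where "g i = grad_y (h i) x y" for i
    define K0 where "K0 = {i\<in>idxI l. 0 < \<theta> i}"
    have g_indep: "\<not> lin_dep_fam S g"
      using S_indep[OF xy] unfolding g_def .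
    obtain \<beta>0 where \<beta>0: "(\<Sum>j\<in>idxJ l p. \<mu> j *\<^sub>R g j) = (\<Sum>i\<in>S. \<beta>0 i *\<^sub>R g i)"
      using sum_eq_sum_over_rank_basis[OF fin(2) SJ S_indep[OF xy] rank[OF xy]] unfolding g_def by blast
    have "(\<Sum>i\<in>idxI l. \<theta> i *\<^sub>R g i) = (\<Sum>i\<in>K0. \<theta> i *\<^sub>R g i)"
      using fin(1) nonneg by (intro sum.mono_neutral_right) (auto simp: K0_def)
    moreover have "finite K0" "K0 \<inter> S = {}" "\<forall>i\<in>K0. 0 \<le> \<theta> i"
      using fin disj by (auto simp: K0_def)
    then obtain K \<alpha> \<beta> where K: "K \<subseteq> K0" "\<forall>i\<in>K. 0 \<le> \<alpha> i" "\<not> lin_dep_fam (K \<union> S) g"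
      "(\<Sum>i\<in>K0. \<theta> i *\<^sub>R g i) + (\<Sum>i\<in>S. \<beta>0 i *\<^sub>R g i) = (\<Sum>i\<in>K. \<alpha> i *\<^sub>R g i) + (\<Sum>i\<in>S. \<beta> i *\<^sub>R g i)"
      using caratheodory_reduction[OF _ fin(3) _ g_indep, of K0 \<theta> \<beta>0] by blast
    moreover have "pos_lin_indep_modulus K S g c"
      using modulus[OF xy _ K(3)[unfolded g_def]] \<open>K \<subseteq> K0\<close> active unfolding K0_def g_def by blast
    ultimately have "\<exists>K \<alpha> \<beta>. K \<subseteq> K0 \<and> (\<forall>i\<in>K. 0 \<le> \<alpha> i) \<and> pos_lin_indep_modulus K S g c \<and>
         (\<Sum>i\<in>idxI l. \<theta> i *\<^sub>R g i) + (\<Sum>j\<in>idxJ l p. \<mu> j *\<^sub>R g j)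
           = (\<Sum>i\<in>K. \<alpha> i *\<^sub>R g i) + (\<Sum>i\<in>S. \<beta> i *\<^sub>R g i)"
      using \<beta>0 by (intro exI[of _ K] exI[of _ \<alpha>] exI[of _ \<beta>]) auto
    then show "\<exists>K \<alpha> \<beta>. K \<subseteq> {i\<in>idxI l. 0 < \<theta> i} \<and> (\<forall>i\<in>K. 0 \<le> \<alpha> i) \<and>
         pos_lin_indep_modulus K S (\<lambda>i. grad_y (h i) x y) c \<and>
         (\<Sum>i\<in>idxI l. \<theta> i *\<^sub>R grad_y (h i) x y) + (\<Sum>j\<in>idxJ l p. \<mu> j *\<^sub>R grad_y (h j) x y)
           = (\<Sum>i\<in>K. \<alpha> i *\<^sub>R grad_y (h i) x y) + (\<Sum>i\<in>S. \<beta> i *\<^sub>R grad_y (h i) x y)"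
      unfolding K0_def g_def[abs_def] .
  qed
qed

lemma inactive_constraints_near:
  assumes "l \<le> p" "\<forall>i\<in>{1..p}. C1_fun (h i)" "yb \<in> feas h l p xb"
  shows "eventually (\<lambda>q. \<forall>i\<in>idxI l - active_set h l xb yb. h i q < 0) (nhds (xb, yb))"
proof (intro eventually_ball_finite ballI)
  show "finite (idxI l - active_set h l xb yb)"
    by (simp add: idxI_def)
  fix i
  assume i: "i \<in> idxI l - active_set h l xb yb"
  then have "h i (xb, yb) < 0" and "C1_fun (h i)"
    using assms by (auto simp: feas_def active_set_def idxI_def le_less)
  then show "eventually (\<lambda>q. h i q < 0) (nhds (xb, yb))"
    using eventually_nhds_dist_continuous[OF C1_fun_continuous, of "h i" "- h i (xb, yb)" "(xb, yb)"]
    by (auto elim!: eventually_mono simp: dist_real_def)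
qed

section \<open>A local Aubin-type estimate for the feasible set\<close>

lemma linearization_error:
  fixes g :: "(real^'n) \<times> (real^'m) \<Rightarrow> real"
  assumes "C1_fun g" "convex C" "(x, y1) \<in> C" "(x, y2) \<in> C"
    and osc: "\<And>q. q \<in> C \<Longrightarrow> norm (grad_y g (fst q) (snd q) - G) \<le> \<omega> / 2"
  shows "\<bar>g (x, y1) - g (x, y2) - grad_y g x y2 \<bullet> (y1 - y2)\<bar> \<le> \<omega> * norm (y1 - y2)"
proof (rule grad_y_taylor_bound[OF assms(1)], intro ballI)
  fix w
  assume "w \<in> closed_segment y1 y2"
  then have "(x, w) \<in> closed_segment (x, y1) (x, y2)"
    by (auto simp: closed_segment_def scaleR_prod_def algebra_simps)
  then have "(x, w) \<in> C"
    using closed_segment_subset[OF assms(3,4,2)] by blast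
  then have "norm (grad_y g x w - G) \<le> \<omega> / 2" "norm (grad_y g x y2 - G) \<le> \<omega> / 2"
    using osc[of "(x, w)"] osc[of "(x, y2)"] assms(4) by auto
  then show "norm (grad_y g x w - grad_y g x y2) \<le> \<omega>"
    using norm_triangle_ineq4[of "grad_y g x w - G" "grad_y g x y2 - G"] by simp
qed

lemma C1_funs_common_lipschitz:
  fixes h :: "nat \<Rightarrow> 'a::euclidean_space \<Rightarrow> real"
  assumes "finite P" "\<forall>i\<in>P. C1_fun (h i)"
  obtains M where "\<And>i. i \<in> P \<Longrightarrow> M-lipschitz_on (cball c R) (h i)"
proof -
  have "\<forall>i\<in>P. \<exists>L. L-lipschitz_on (cball c R) (h i)"
    using assms(2) C1_fun_lipschitz_on_cball by metis
  then obtain L where L: "\<And>i. i \<in> P \<Longrightarrow> (L i)-lipschitz_on (cball c R) (h i)"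
    by metis
  have "L i \<le> (\<Sum>j\<in>P. L j)" if "i \<in> P" for i
    using that assms(1) L lipschitz_on_nonneg by (intro member_le_sum) auto
  then show thesis
    using that L by (meson lipschitz_on_mono order_refl)
qed

lemma error_estimate_arith:
  fixes d e t \<eta> \<omega> M c :: real
  assumes d: "d > 0" and c: "c > 0" and M: "M \<ge> 0" and t: "t \<ge> 0" and eta: "\<eta> \<ge> 0" "\<eta> \<le> 1/10"
    and Me: "M * \<eta> \<le> c / 24" and om: "\<omega> \<ge> 0" "\<omega> \<le> c / 25"
    and e1: "e \<ge> (1 - \<eta>) * d" and e2: "e \<le> (1 + \<eta>) * d"
    and main: "c * (e^2 - \<eta> * d * e) \<le> (e + \<eta> * d) * (M * t + M * \<eta> * d + \<omega> * e)"
  shows "d \<le> 3 * M * t / c"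
proof -
  have ed: "\<eta> * d \<le> d / 10" using mult_right_mono[OF eta(2), of d] d by simp
  have q1: "(1 - \<eta>) * d = d - \<eta> * d" by (simp add: algebra_simps)
  have q2: "(1 + \<eta>) * d = d + \<eta> * d" by (simp add: algebra_simps)
  have e0: "e \<ge> 9/10 * d" using e1 ed q1 by linarith
  have e3: "e \<le> 11/10 * d" using e2 ed q2 by linarith
  have "(9/10 * d)^2 \<le> e^2" using e0 d by (intro power_mono) auto
  then have A1: "81/100 * d^2 \<le> e^2" by (simp add: power2_eq_square)
  have "\<eta> * d * e \<le> (1/10) * d * (11/10 * d)"
    using eta d e3 e0 by (intro mult_mono) auto
  then have A2: "\<eta> * d * e \<le> 11/100 * d^2" by (simp add: power2_eq_square)
  have LHS: "c * (7/10 * d^2) \<le> c * (e^2 - \<eta> * d * e)"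
    using A1 A2 c by (intro mult_left_mono) auto
  have B1: "e + \<eta> * d \<le> 12/10 * d" using e3 ed by linarith
  have "\<omega> * e \<le> (c/25) * (11/10 * d)" using om e3 e0 d by (intro mult_mono) auto
  moreover have "M * \<eta> * d \<le> (c/24) * d" using Me d by (intro mult_right_mono) auto
  moreover have "(c/25) * (11/10 * d) = 11/250 * (c * d)" "(c/24) * d = (c*d)/24" "(c/10) * d = (c * d)/10" by simp_all
  moreover have "c * d > 0" using c d by simp
  ultimately have B2: "M * t + M * \<eta> * d + \<omega> * e \<le> M * t + (c/10) * d"
    by linarith
  have B3: "0 \<le> M * t + M * \<eta> * d + \<omega> * e" using M t eta d om e0 by (intro add_nonneg_nonneg mult_nonneg_nonneg) auto
  have "(e + \<eta> * d) * (M * t + M * \<eta> * d + \<omega> * e) \<le> (12/10 * d) * (M * t + (c/10) * d)"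
    using B1 B2 B3 d by (intro mult_mono) auto
  with main LHS have "c * (7/10 * d^2) \<le> (12/10 * d) * (M * t + (c/10) * d)" by linarith
  then have "d * (c * (7/10 * d)) \<le> d * ((12/10) * (M * t + (c/10) * d))" by (simp add: power2_eq_square algebra_simps)
  then have "c * (7/10 * d) \<le> (12/10) * (M * t + (c/10) * d)" using d by (simp add: mult_le_cancel_left)
  then have "c * d * (58/100) \<le> (12/10) * M * t" by (simp add: algebra_simps)
  moreover have "M * t \<ge> 0" using M t by simp
  ultimately have "c * d \<le> 3 * M * t" by linarith
  then show ?thesis using c by (simp add: field_simps)
qed

lemma proximal_point_estimate:
  fixes y z w :: "'a::real_inner"
  assumes c: "c > 0" and M: "M \<ge> 0" and t: "t \<ge> 0" and \<eta>: "0 \<le> \<eta>" "\<eta> \<le> 1/10" "M * \<eta> \<le> c / 24"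
    and \<omega>: "0 \<le> \<omega>" "\<omega> \<le> c / 25"
    and "dist w z \<le> \<eta> * dist y z"
    and key: "c * (((y - w) + (z - w)) \<bullet> (y - w))
      \<le> norm ((y - w) + (z - w)) * (M * t + M * (\<eta> * dist y z) + \<omega> * norm (y - w))"
  shows "dist y z \<le> 3 * M * t / c"
proof (cases "dist y z = 0")
  case True
  then show ?thesis
    using c M t by simp
next
  case False
  have near: "norm (z - w) \<le> \<eta> * dist y z"
    using \<open>dist w z \<le> \<eta> * dist y z\<close> by (simp add: dist_norm norm_minus_commute)
  define d e where "d = dist y z" and "e = norm (y - w)"
  have "d \<le> e + norm (z - w)" "e \<le> d + norm (z - w)"
    using norm_triangle_ineq[of "y - w" "w - z"] norm_triangle_ineq[of "y - z" "z - w"]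
    by (simp_all add: d_def e_def dist_norm norm_minus_commute)
  then have e_bounds: "(1 - \<eta>) * d \<le> e" "e \<le> (1 + \<eta>) * d"
    using near by (simp_all add: d_def algebra_simps)
  have "\<bar>(z - w) \<bullet> (y - w)\<bar> \<le> \<eta> * d * e"
    using Cauchy_Schwarz_ineq2[of "z - w" "y - w"] near mult_right_mono[OF near norm_ge_zero[of "y - w"]]
    by (simp add: d_def e_def)
  then have "e\<^sup>2 - \<eta> * d * e \<le> ((y - w) + (z - w)) \<bullet> (y - w)"
    by (simp add: inner_add_left e_def power2_norm_eq_inner)
  moreover have "norm ((y - w) + (z - w)) \<le> e + \<eta> * d"
    using norm_triangle_ineq[of "y - w" "z - w"] near by (simp add: d_def e_def)
  moreover have "0 \<le> M * t + M * \<eta> * d + \<omega> * e"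
    using M t \<eta> \<omega> by (simp add: d_def e_def)
  ultimately have "c * (e\<^sup>2 - \<eta> * d * e) \<le> (e + \<eta> * d) * (M * t + M * \<eta> * d + \<omega> * e)"
    using key c unfolding d_def[symmetric] e_def[symmetric] mult.assoc[symmetric]
    by (smt (verit, best) mult_left_mono mult_right_mono)
  then show ?thesis
    using error_estimate_arith[of d c M t \<eta> \<omega> e] False c M t \<eta> \<omega> e_bounds by (simp add: d_def)
qed

text \<open>An Aubin-type estimate for \<open>feas h l p\<close> around \<open>(xb, yb)\<close>, localised to those \<open>x\<close> for which
  \<open>feas h l p x\<close> already comes within \<open>\<delta>\<close> of the point \<open>y'\<close> to be approximated.\<close>

definition feas_aubin_bound ::
  "(nat \<Rightarrow> (real^'n) \<times> (real^'m) \<Rightarrow> real) \<Rightarrow> nat \<Rightarrow> nat \<Rightarrow> real^'n \<Rightarrow> real^'m \<Rightarrow> real \<Rightarrow> real \<Rightarrow> bool" where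
  "feas_aubin_bound h l p xb yb \<delta> \<kappa> \<longleftrightarrow>
    (\<forall>x x' y' w. x \<in> ball xb \<delta> \<longrightarrow> x' \<in> ball xb \<delta> \<longrightarrow> y' \<in> feas h l p x' \<longrightarrow> dist y' yb < \<delta> \<longrightarrow>
       w \<in> feas h l p x \<longrightarrow> dist w y' < \<delta> \<longrightarrow> (\<exists>z\<in>feas h l p x. dist z y' \<le> \<kappa> * dist x x'))"

text \<open>The oscillation bound \<open>c / 50\<close> on the partial gradients makes the linearisation error at most
  \<open>c / 25\<close>, the threshold in \<open>proximal_point_estimate\<close>.\<close>

locale rcpld_neighbourhood =
  fixes h :: "nat \<Rightarrow> (real^'n) \<times> (real^'m) \<Rightarrow> real" and l p :: nat and xb :: "real^'n" and yb :: "real^'m"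
    and c r M :: real and S :: "nat set"
  assumes l_le_p: "l \<le> p" and C1: "\<forall>i\<in>{1..p}. C1_fun (h i)"
    and c_pos: "c > 0" and M_nonneg: "M \<ge> 0" and S_sub: "S \<subseteq> idxJ l p"
    and multipliers: "\<And>x y \<theta> \<mu>. (x, y) \<in> ball (xb, yb) r \<Longrightarrow> \<forall>i\<in>idxI l. 0 \<le> \<theta> i \<Longrightarrow>
       \<forall>i\<in>idxI l. 0 < \<theta> i \<longrightarrow> i \<in> active_set h l xb yb \<Longrightarrow>
       \<exists>K \<alpha> \<beta>. K \<subseteq> {i\<in>idxI l. 0 < \<theta> i} \<and> (\<forall>i\<in>K. 0 \<le> \<alpha> i) \<and>
         pos_lin_indep_modulus K S (\<lambda>i. grad_y (h i) x y) c \<and>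
         (\<Sum>i\<in>idxI l. \<theta> i *\<^sub>R grad_y (h i) x y) + (\<Sum>j\<in>idxJ l p. \<mu> j *\<^sub>R grad_y (h j) x y)
           = (\<Sum>i\<in>K. \<alpha> i *\<^sub>R grad_y (h i) x y) + (\<Sum>i\<in>S. \<beta> i *\<^sub>R grad_y (h i) x y)"
    and inactive: "\<And>q i. q \<in> ball (xb, yb) r \<Longrightarrow> i \<in> idxI l - active_set h l xb yb \<Longrightarrow> h i q < 0"
    and grad_osc: "\<And>q i. q \<in> ball (xb, yb) r \<Longrightarrow> i \<in> {1..p} \<Longrightarrow>
       norm (grad_y (h i) (fst q) (snd q) - grad_y (h i) xb yb) \<le> c / 50"
    and lipschitz: "\<And>i. i \<in> {1..p} \<Longrightarrow> M-lipschitz_on (ball (xb, yb) r) (h i)"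
begin

lemma KKT_multipliers:
  assumes xw: "(x, w) \<in> ball (xb, yb) r" and "\<rho> > 0"
  shows "\<exists>K \<alpha> \<beta>. K \<subseteq> {i\<in>idxI l. 0 < h i (x, w)} \<and> (\<forall>i\<in>K. 0 \<le> \<alpha> i) \<and>
    pos_lin_indep_modulus K S (\<lambda>i. grad_y (h i) x w) c \<and>
    (\<Sum>i\<in>idxI l. (\<rho> * max (h i (x, w)) 0) *\<^sub>R grad_y (h i) x w) + (\<Sum>j\<in>idxJ l p. (\<rho> * h j (x, w)) *\<^sub>R grad_y (h j) x w)
      = (\<Sum>i\<in>K. \<alpha> i *\<^sub>R grad_y (h i) x w) + (\<Sum>i\<in>S. \<beta> i *\<^sub>R grad_y (h i) x w)"
proof -
  have "\<forall>i\<in>idxI l. 0 < \<rho> * max (h i (x, w)) 0 \<longrightarrow> i \<in> active_set h l xb yb"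
    using inactive[OF xw] by (force simp: zero_less_mult_iff)
  moreover have "{i\<in>idxI l. 0 < \<rho> * max (h i (x, w)) 0} = {i\<in>idxI l. 0 < h i (x, w)}"
    using \<open>\<rho> > 0\<close> by (auto simp: zero_less_mult_iff)
  ultimately show ?thesis
    using multipliers[OF xw, of "\<lambda>i. \<rho> * max (h i (x, w)) 0" "\<lambda>j. \<rho> * h j (x, w)"] \<open>\<rho> > 0\<close> by simp
qed

lemma linearization:
  assumes "i \<in> {1..p}" "(x, y1) \<in> ball (xb, yb) r" "(x, y2) \<in> ball (xb, yb) r"
  shows "\<bar>h i (x, y1) - h i (x, y2) - grad_y (h i) x y2 \<bullet> (y1 - y2)\<bar> \<le> c / 25 * norm (y1 - y2)"
  using assms C1 grad_osc by (intro linearization_error[where C="ball (xb, yb) r"]) auto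

lemma linearized_constraint_bounds:
  assumes i: "i \<in> {1..p}"
    and balls: "(x, y') \<in> ball (xb, yb) r" "(x', y') \<in> ball (xb, yb) r" "(x, z) \<in> ball (xb, yb) r"
      "(x, w) \<in> ball (xb, yb) r"
    and "dist w z \<le> s"
  defines "B \<equiv> M * dist x x' + M * s + c / 25 * norm (y' - w)"
  shows "h i (x', y') \<le> 0 \<Longrightarrow> 0 < h i (x, w) \<Longrightarrow> grad_y (h i) x w \<bullet> (y' - w) \<le> B"
    and "h i (x', y') = 0 \<Longrightarrow> h i (x, z) = 0 \<Longrightarrow> \<bar>grad_y (h i) x w \<bullet> (y' - w)\<bar> \<le> B"
proof -
  have "\<bar>h i (x, y') - h i (x', y')\<bar> \<le> M * dist x x'"
    using lipschitz_onD[OF lipschitz[OF i] balls(1,2)] by (simp add: dist_Pair_Pair dist_real_def)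
  moreover have "\<bar>h i (x, w) - h i (x, z)\<bar> \<le> M * s"
    using lipschitz_onD[OF lipschitz[OF i] balls(4,3)] mult_left_mono[OF \<open>dist w z \<le> s\<close> M_nonneg]
    by (simp add: dist_Pair_Pair dist_real_def)
  moreover have "\<bar>h i (x, y') - h i (x, w) - grad_y (h i) x w \<bullet> (y' - w)\<bar> \<le> c / 25 * norm (y' - w)"
    by (rule linearization[OF i balls(1,4)])
  moreover have "0 \<le> s"
    using \<open>dist w z \<le> s\<close> zero_le_dist[of w z] by linarith
  then have "0 \<le> M * s"
    using M_nonneg by simp
  ultimately show "h i (x', y') \<le> 0 \<Longrightarrow> 0 < h i (x, w) \<Longrightarrow> grad_y (h i) x w \<bullet> (y' - w) \<le> B"
    and "h i (x', y') = 0 \<Longrightarrow> h i (x, z) = 0 \<Longrightarrow> \<bar>grad_y (h i) x w \<bullet> (y' - w)\<bar> \<le> B"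
    unfolding B_def abs_le_iff by linarith+
qed

lemma multiplier_estimate:
  assumes balls: "(x, y') \<in> ball (xb, yb) r" "(x', y') \<in> ball (xb, yb) r" "(x, z) \<in> ball (xb, yb) r"
      "(x, w) \<in> ball (xb, yb) r"
    and feas: "y' \<in> feas h l p x'" "z \<in> feas h l p x"
    and \<eta>: "0 \<le> \<eta>" "\<eta> \<le> 1/10" "M * \<eta> \<le> c / 24" and near: "dist w z \<le> \<eta> * dist y' z"
    and "\<rho> > 0"
    and stat: "(y' - w) + (z - w) = (\<Sum>i\<in>idxI l. (\<rho> * max (h i (x, w)) 0) *\<^sub>R grad_y (h i) x w)
         + (\<Sum>j\<in>idxJ l p. (\<rho> * h j (x, w)) *\<^sub>R grad_y (h j) x w)"
  shows "dist y' z \<le> 3 * M * dist x x' / c"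
proof -
  obtain K \<alpha> \<beta> where K: "K \<subseteq> {i\<in>idxI l. 0 < h i (x, w)}" and \<alpha>: "\<forall>i\<in>K. 0 \<le> \<alpha> i"
    and modulus: "pos_lin_indep_modulus K S (\<lambda>i. grad_y (h i) x w) c"
    and rep: "(y' - w) + (z - w) = (\<Sum>i\<in>K. \<alpha> i *\<^sub>R grad_y (h i) x w) + (\<Sum>i\<in>S. \<beta> i *\<^sub>R grad_y (h i) x w)"
    using KKT_multipliers[OF balls(4) \<open>\<rho> > 0\<close>] stat by auto
  define B where "B = M * dist x x' + M * (\<eta> * dist y' z) + c / 25 * norm (y' - w)"
  have "idxI l \<subseteq> {1..p}" "idxJ l p \<subseteq> {1..p}"
    using l_le_p by (auto simp: idxI_def idxJ_def)
  have "\<forall>i\<in>K. grad_y (h i) x w \<bullet> (y' - w) \<le> B"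
  proof
    fix i
    assume "i \<in> K"
    then have "i \<in> {1..p}" "h i (x', y') \<le> 0" "0 < h i (x, w)"
      using K feas(1) \<open>idxI l \<subseteq> {1..p}\<close> by (auto simp: feas_def)
    then show "grad_y (h i) x w \<bullet> (y' - w) \<le> B"
      unfolding B_def using linearized_constraint_bounds(1)[OF _ balls near] by blast
  qed
  moreover have "\<forall>i\<in>S. \<bar>grad_y (h i) x w \<bullet> (y' - w)\<bar> \<le> B"
  proof
    fix i
    assume "i \<in> S"
    then have "i \<in> {1..p}" "h i (x', y') = 0" "h i (x, z) = 0"
      using S_sub feas \<open>idxJ l p \<subseteq> {1..p}\<close> by (auto simp: feas_def)
    then show "\<bar>grad_y (h i) x w \<bullet> (y' - w)\<bar> \<le> B"
      unfolding B_def using linearized_constraint_bounds(2)[OF _ balls near] by blast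
  qed
  ultimately have "((y' - w) + (z - w)) \<bullet> (y' - w) \<le> ((\<Sum>i\<in>K. \<alpha> i) + (\<Sum>i\<in>S. \<bar>\<beta> i\<bar>)) * B"
    unfolding rep by (rule inner_comb_le[OF \<alpha>])
  then have "c * (((y' - w) + (z - w)) \<bullet> (y' - w)) \<le> (c * ((\<Sum>i\<in>K. \<alpha> i) + (\<Sum>i\<in>S. \<bar>\<beta> i\<bar>))) * B"
    using c_pos by (simp add: mult.assoc mult_left_mono)
  also have "\<dots> \<le> norm ((y' - w) + (z - w)) * B"
  proof (rule mult_right_mono)
    show "c * ((\<Sum>i\<in>K. \<alpha> i) + (\<Sum>i\<in>S. \<bar>\<beta> i\<bar>)) \<le> norm ((y' - w) + (z - w))"
      using modulus \<alpha> unfolding rep pos_lin_indep_modulus_def by blast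
    show "0 \<le> B"
      using M_nonneg c_pos \<eta>(1) by (simp add: B_def)
  qed
  finally show ?thesis
    unfolding B_def using c_pos
    by (intro proximal_point_estimate[where \<omega>="c / 25", OF c_pos M_nonneg zero_le_dist \<eta> _ _ near]) auto
qed

definition prox_tolerance :: real where
  "prox_tolerance = min (1/10) (c / (24 * (M + 1)))"

lemma prox_tolerance_bounds: "0 < prox_tolerance" "prox_tolerance \<le> 1/10" "M * prox_tolerance \<le> c / 24"
proof -
  show "0 < prox_tolerance"
    using c_pos M_nonneg by (simp add: prox_tolerance_def)
  show "prox_tolerance \<le> 1/10"
    unfolding prox_tolerance_def by (rule min.cobounded1)
  have "M * prox_tolerance \<le> M * (c / (24 * (M + 1)))"
    using M_nonneg by (intro mult_left_mono) (auto simp: prox_tolerance_def)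
  also have "\<dots> \<le> c / 24"
    using M_nonneg c_pos by (simp add: field_simps)
  finally show "M * prox_tolerance \<le> c / 24" .
qed

lemma error_estimate:
  assumes x: "dist x xb < r / 4" and x': "dist x' xb < r / 4"
    and y': "y' \<in> feas h l p x'" "dist y' yb < r / 4"
    and w: "w \<in> feas h l p x" "dist w y' < r / 4"
  shows "\<exists>z\<in>feas h l p x. dist z y' \<le> 3 * M / c * dist x x'"
proof -
  have in_ball: "(u, v) \<in> ball (xb, yb) r" if "dist u xb < r / 4" "dist v yb < 3 * r / 4" for u v
    using dist_Pair_Pair[of xb yb u v] sqrt_sum_squares_le_sum_abs[of "dist xb u" "dist yb v"] that
    by (simp add: dist_commute)
  have "r > 0"
    using x zero_le_dist[of x xb] by linarith
  have "feas h l p x \<noteq> {}"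
    using w(1) by auto
  obtain z where z: "z \<in> feas h l p x" and proj: "\<And>u. u \<in> feas h l p x \<Longrightarrow> dist y' z \<le> dist y' u"
    by (rule distance_attains_inf[OF closed_feas[OF l_le_p C1] \<open>feas h l p x \<noteq> {}\<close>, of y']) auto
  define d where "d = dist y' z"
  have "d < r / 4"
    using proj[OF w(1)] w(2) unfolding d_def by (simp add: dist_commute)
  show ?thesis
  proof (cases "d = 0")
    case True
    then show ?thesis
      using z c_pos M_nonneg by (intro bexI[of _ z]) (auto simp: d_def dist_commute)
  next
    case False
    note \<eta> = prox_tolerance_bounds
    obtain \<rho> w0 where "\<rho> > 0" and near: "dist w0 z \<le> prox_tolerance * d"
      and stat: "(y' - w0) + (z - w0) = (\<Sum>i\<in>idxI l. (\<rho> * max (h i (x, w0)) 0) *\<^sub>R grad_y (h i) x w0)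
         + (\<Sum>j\<in>idxJ l p. (\<rho> * h j (x, w0)) *\<^sub>R grad_y (h j) x w0)"
      using approximate_KKT_point[OF l_le_p C1 z, of y' "prox_tolerance * d"] proj \<eta>(1) False
      by (auto simp: d_def)
    have "prox_tolerance * d \<le> d / 10"
      using \<eta>(2) False by (simp add: d_def)
    have "dist z yb < r / 2"
      using dist_triangle[of z yb y'] \<open>d < r / 4\<close> y'(2) by (simp add: d_def dist_commute)
    moreover have "dist w0 yb < 3 * r / 4"
      using dist_triangle[of w0 yb z] near \<open>prox_tolerance * d \<le> d / 10\<close> \<open>d < r / 4\<close> \<open>dist z yb < r / 2\<close>
        zero_le_dist[of y' z] unfolding d_def by linarith
    ultimately have "(x, z) \<in> ball (xb, yb) r" "(x, w0) \<in> ball (xb, yb) r" "(x, y') \<in> ball (xb, yb) r"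
      "(x', y') \<in> ball (xb, yb) r"
      using y'(2) \<open>r > 0\<close> by (auto intro!: in_ball[OF x] in_ball[OF x'] simp del: mem_ball)
    then have "dist y' z \<le> 3 * M * dist x x' / c"
      using multiplier_estimate[OF _ _ _ _ y'(1) z \<eta>(1)[THEN less_imp_le] \<eta>(2,3) near[unfolded d_def]
          \<open>\<rho> > 0\<close> stat] by blast
    then show ?thesis
      using z by (intro bexI[of _ z]) (auto simp: dist_commute)
  qed
qed

end

lemma RCPLD_imp_neighbourhood:
  fixes h :: "nat \<Rightarrow> (real^'n) \<times> (real^'m) \<Rightarrow> real"
  assumes lp: "l \<le> p" and C1: "\<forall>i\<in>{1..p}. C1_fun (h i)"
    and "yb \<in> feas h l p xb" "RCPLD h l p xb yb"
  obtains c r M S where "r > 0" "rcpld_neighbourhood h l p xb yb c r M S"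
proof -
  obtain c r1 S where "c > 0" "r1 > 0" "S \<subseteq> idxJ l p" and multipliers:
    "\<And>x y \<theta> \<mu>. (x, y) \<in> ball (xb, yb) r1 \<Longrightarrow> \<forall>i\<in>idxI l. 0 \<le> \<theta> i \<Longrightarrow>
       \<forall>i\<in>idxI l. 0 < \<theta> i \<longrightarrow> i \<in> active_set h l xb yb \<Longrightarrow>
       \<exists>K \<alpha> \<beta>. K \<subseteq> {i\<in>idxI l. 0 < \<theta> i} \<and> (\<forall>i\<in>K. 0 \<le> \<alpha> i) \<and>
         pos_lin_indep_modulus K S (\<lambda>i. grad_y (h i) x y) c \<and>
         (\<Sum>i\<in>idxI l. \<theta> i *\<^sub>R grad_y (h i) x y) + (\<Sum>j\<in>idxJ l p. \<mu> j *\<^sub>R grad_y (h j) x y)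
           = (\<Sum>i\<in>K. \<alpha> i *\<^sub>R grad_y (h i) x y) + (\<Sum>i\<in>S. \<beta> i *\<^sub>R grad_y (h i) x y)"
    using RCPLD_multiplier_bound[OF lp C1 assms(4)] by blast
  have "eventually (\<lambda>q. \<forall>i\<in>{1..p}. dist (grad_y (h i) (fst q) (snd q)) (grad_y (h i) xb yb) < c / 50)
      (nhds (xb, yb))"
    using C1 eventually_nhds_dist_continuous[OF continuous_on_grad_y, of _ "c / 50" "(xb, yb)"] \<open>c > 0\<close>
    by (intro eventually_ball_finite) (auto simp: case_prod_beta)
  with inactive_constraints_near[OF lp C1 assms(3)]
  have "eventually (\<lambda>q. (\<forall>i\<in>idxI l - active_set h l xb yb. h i q < 0) \<and>
      (\<forall>i\<in>{1..p}. dist (grad_y (h i) (fst q) (snd q)) (grad_y (h i) xb yb) < c / 50)) (nhds (xb, yb))"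
    by (rule eventually_conj)
  then obtain r2 where "r2 > 0" and near: "\<And>q. dist q (xb, yb) < r2 \<Longrightarrow>
      (\<forall>i\<in>idxI l - active_set h l xb yb. h i q < 0) \<and>
      (\<forall>i\<in>{1..p}. dist (grad_y (h i) (fst q) (snd q)) (grad_y (h i) xb yb) < c / 50)"
    unfolding eventually_nhds_metric by blast
  define r where "r = min r1 r2"
  obtain M where M: "\<And>i. i \<in> {1..p} \<Longrightarrow> M-lipschitz_on (cball (xb, yb) r) (h i)"
    using C1_funs_common_lipschitz[of "{1..p}" h] C1 by blast
  have "(max M 0)-lipschitz_on (ball (xb, yb) r) (h i)" if "i \<in> {1..p}" for i
    by (rule lipschitz_on_mono[OF M[OF that] ball_subset_cball]) auto
  then have "rcpld_neighbourhood h l p xb yb c r (max M 0) S"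
    using lp C1 \<open>c > 0\<close> \<open>S \<subseteq> idxJ l p\<close> multipliers near
    by unfold_locales (auto simp: r_def dist_commute dist_norm norm_minus_commute less_imp_le)
  moreover have "r > 0"
    using \<open>r1 > 0\<close> \<open>r2 > 0\<close> by (simp add: r_def)
  ultimately show thesis
    using that by blast
qed

lemma local_feas_aubin_bound:
  fixes h :: "nat \<Rightarrow> (real^'n) \<times> (real^'m) \<Rightarrow> real"
  assumes "l \<le> p" "\<forall>i\<in>{1..p}. C1_fun (h i)" "yb \<in> feas h l p xb" "RCPLD h l p xb yb"
  obtains \<delta> \<kappa> where "\<delta> > 0" "\<kappa> \<ge> 0" "feas_aubin_bound h l p xb yb \<delta> \<kappa>"
proof -
  obtain c r M S where "r > 0" and nbhd: "rcpld_neighbourhood h l p xb yb c r M S"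
    using RCPLD_imp_neighbourhood[OF assms] by blast
  interpret rcpld_neighbourhood h l p xb yb c r M S
    by (fact nbhd)
  show thesis
  proof
    show "r / 4 > 0" "3 * M / c \<ge> 0"
      using \<open>r > 0\<close> M_nonneg c_pos by auto
    show "feas_aubin_bound h l p xb yb (r / 4) (3 * M / c)"
      unfolding feas_aubin_bound_def using error_estimate by (simp add: dist_commute)
  qed
qed

section \<open>Uniform and convex versions of the estimate\<close>

lemma feas_aubin_bound_shift:
  assumes bound: "feas_aubin_bound h l p xb v D K" and "dist u v + \<delta> \<le> D" "K \<le> \<kappa>"
  shows "feas_aubin_bound h l p xb u \<delta> \<kappa>"
  unfolding feas_aubin_bound_def
proof (intro allI impI)
  fix x x' y' w
  assume x: "x \<in> ball xb \<delta>" "x' \<in> ball xb \<delta>" and y': "y' \<in> feas h l p x'" "dist y' u < \<delta>"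
    and w: "w \<in> feas h l p x" "dist w y' < \<delta>"
  have "\<delta> \<le> D"
    using assms(2) zero_le_dist[of u v] by linarith
  moreover have "dist y' v < D"
    using dist_triangle[of y' v u] y'(2) assms(2) by linarith
  ultimately obtain z where "z \<in> feas h l p x" "dist z y' \<le> K * dist x x'"
    using bound x y'(1) w unfolding feas_aubin_bound_def by (meson less_le_trans mem_ball)
  moreover have "K * dist x x' \<le> \<kappa> * dist x x'"
    using assms(3) by (simp add: mult_right_mono)
  ultimately show "\<exists>z\<in>feas h l p x. dist z y' \<le> \<kappa> * dist x x'"
    by force
qed

lemma uniform_feas_aubin_bound:
  fixes h :: "nat \<Rightarrow> (real^'n) \<times> (real^'m) \<Rightarrow> real"
  assumes lp: "l \<le> p" and C1: "\<forall>i\<in>{1..p}. C1_fun (h i)"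
    and compact: "compact (feas h l p xb)" and R: "\<forall>y\<in>feas h l p xb. RCPLD h l p xb y"
  obtains \<delta> \<kappa> where "\<delta> > 0" "\<kappa> \<ge> 0" "\<forall>u\<in>feas h l p xb. feas_aubin_bound h l p xb u \<delta> \<kappa>"
proof (cases "feas h l p xb = {}")
  case True
  then show thesis
    using that[of 1 0] by simp
next
  case False
  have "\<exists>D K. D > 0 \<and> K \<ge> 0 \<and> feas_aubin_bound h l p xb v D K" if "v \<in> feas h l p xb" for v
    using local_feas_aubin_bound[OF lp C1 that] R that by metis
  then obtain D K where DK: "\<And>v. v \<in> feas h l p xb \<Longrightarrow> D v > 0 \<and> K v \<ge> 0 \<and> feas_aubin_bound h l p xb v (D v) (K v)"
    by metis
  then have "feas h l p xb \<subseteq> (\<Union>v\<in>feas h l p xb. ball v (D v / 2))"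
    by force
  then obtain T where T: "T \<subseteq> feas h l p xb" "finite T" "feas h l p xb \<subseteq> (\<Union>v\<in>T. ball v (D v / 2))"
    using compactE_image[OF compact, of "feas h l p xb" "\<lambda>v. ball v (D v / 2)"] by blast
  then have "T \<noteq> {}"
    using False by auto
  define \<delta> where "\<delta> = Min ((\<lambda>v. D v / 2) ` T)"
  define \<kappa> where "\<kappa> = Max (K ` T)"
  show thesis
  proof
    show "\<delta> > 0"
      unfolding \<delta>_def using T DK \<open>T \<noteq> {}\<close> by (subst Min_gr_iff) auto
    show "\<kappa> \<ge> 0"
      unfolding \<kappa>_def using T DK \<open>T \<noteq> {}\<close> by (subst Max_ge_iff) auto
    show "\<forall>u\<in>feas h l p xb. feas_aubin_bound h l p xb u \<delta> \<kappa>"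
    proof
      fix u
      assume "u \<in> feas h l p xb"
      then obtain v where v: "v \<in> T" "dist v u < D v / 2"
        using T(3) by auto
      have "dist u v + \<delta> \<le> D v"
        using v Min_le[OF _ imageI[OF v(1)], of "\<lambda>v. D v / 2"] T(2) by (simp add: \<delta>_def dist_commute)
      moreover have "K v \<le> \<kappa>"
        using v(1) T(2) by (simp add: \<kappa>_def)
      ultimately show "feas_aubin_bound h l p xb u \<delta> \<kappa>"
        using DK[of v] T(1) v(1) by (blast intro: feas_aubin_bound_shift)
    qed
  qed
qed

lemma closed_graph_feas:
  assumes "l \<le> p" "\<forall>i\<in>{1..p}. C1_fun (h i)"
  shows "closed {(x, y). y \<in> feas h l p x}"
proof -
  have "{(x, y). y \<in> feas h l p x} = (\<Inter>i\<in>idxI l. {q. h i q \<le> 0}) \<inter> (\<Inter>i\<in>idxJ l p. {q. h i q = 0})"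
    by (auto simp: feas_def)
  moreover have "continuous_on UNIV (h i)" if "i \<in> idxI l \<union> idxJ l p" for i
    using assms that idx_subset[OF assms(1)] C1_fun_continuous by blast
  ultimately show ?thesis
    by (auto intro!: closed_Int closed_INT closed_Collect_le closed_Collect_eq continuous_intros
        simp del: Collect_case_prod)
qed

lemma feas_upper_semicontinuous:
  fixes h :: "nat \<Rightarrow> (real^'n) \<times> (real^'m) \<Rightarrow> real"
  assumes lp: "l \<le> p" and C1: "\<forall>i\<in>{1..p}. C1_fun (h i)" and "locally_bounded_at (feas h l p) xb"
    and eps: "\<epsilon> > 0"
  shows "\<exists>e>0. \<forall>x\<in>ball xb e. \<forall>y\<in>feas h l p x. \<exists>u\<in>feas h l p xb. dist y u < \<epsilon>"
proof (rule ccontr)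
  obtain B0 V0 where B0: "bounded B0" "\<forall>x\<in>V0. feas h l p x \<subseteq> B0" and V0: "open V0" "xb \<in> V0"
    using assms(3) unfolding locally_bounded_at_def by metis
  obtain \<rho>0 where \<rho>0: "\<rho>0 > 0" "ball xb \<rho>0 \<subseteq> V0" using V0 open_contains_ball by blast
  assume neg: "\<not> ?thesis"
  have "\<forall>n. \<exists>x y. x \<in> ball xb (min \<rho>0 (1 / Suc n)) \<and> y \<in> feas h l p x \<and> (\<forall>u\<in>feas h l p xb. \<not> dist y u < \<epsilon>)"
  proof
    fix n
    define e where "e = min \<rho>0 (1 / Suc n)"
    have "e > 0" unfolding e_def using \<rho>0(1) by simp
    with neg obtain x where x: "x \<in> ball xb e" "\<not> (\<forall>y\<in>feas h l p x. \<exists>u\<in>feas h l p xb. dist y u < \<epsilon>)" by blast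
    then obtain y where "y \<in> feas h l p x" "\<forall>u\<in>feas h l p xb. \<not> dist y u < \<epsilon>" by blast
    then show "\<exists>x y. x \<in> ball xb (min \<rho>0 (1 / Suc n)) \<and> y \<in> feas h l p x \<and> (\<forall>u\<in>feas h l p xb. \<not> dist y u < \<epsilon>)"
      using x(1) unfolding e_def by blast
  qed
  then obtain X Y where XY: "\<And>n. X n \<in> ball xb (min \<rho>0 (1 / Suc n))" "\<And>n. Y n \<in> feas h l p (X n)"
    "\<And>n. \<forall>u\<in>feas h l p xb. \<not> dist (Y n) u < \<epsilon>" by metis
  have XV: "X n \<in> V0" for n using XY(1)[of n] \<rho>0(2) by auto
  have "bounded (range Y)" using B0 XV XY(2) by (meson bounded_subset image_subset_iff subsetD)
  then obtain yl r where r: "strict_mono r" and lim: "(Y \<circ> r) \<longlonglongrightarrow> yl"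
    using bounded_imp_convergent_subsequence by blast
  have "X \<longlonglongrightarrow> xb"
  proof (subst tendsto_dist_iff, rule Lim_null_comparison)
    show "\<forall>\<^sub>F n in sequentially. norm (dist (X n) xb) \<le> inverse (real (Suc n))"
      using XY(1) by (intro always_eventually allI) (simp add: dist_commute inverse_eq_divide less_imp_le)
    show "(\<lambda>n. inverse (real (Suc n))) \<longlonglongrightarrow> 0" by (rule LIMSEQ_inverse_real_of_nat)
  qed
  then have "(X \<circ> r) \<longlonglongrightarrow> xb" using LIMSEQ_subseq_LIMSEQ r by blast
  then have tl: "(\<lambda>n. (X (r n), Y (r n))) \<longlonglongrightarrow> (xb, yl)" using lim unfolding o_def by (intro tendsto_Pair)
  have inG: "(X (r n), Y (r n)) \<in> {(x, y). y \<in> feas h l p x}" for n using XY(2) by simp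
  have "(xb, yl) \<in> {(x, y). y \<in> feas h l p x}"
    by (rule closed_sequentially[OF closed_graph_feas[OF lp C1] inG tl])
  then have ylF: "yl \<in> feas h l p xb" by simp
  have "\<forall>\<^sub>F n in sequentially. dist (Y (r n)) yl < \<epsilon>" using lim eps unfolding o_def tendsto_iff by blast
  then obtain n where "dist (Y (r n)) yl < \<epsilon>" by (meson eventually_sequentially le_refl)
  with XY(3) ylF show False by blast
qed

lemma convex_feas:
  assumes conv: "\<forall>i\<in>idxI l. convex_on UNIV (\<lambda>y. h i (x, y))"
    and affine: "\<forall>i\<in>idxJ l p. \<exists>a b. \<forall>y. h i (x, y) = inner a y + b"
  shows "convex (feas h l p x)"
proof (rule convexI)
  fix y1 y2 and u v :: real
  assume y: "y1 \<in> feas h l p x" "y2 \<in> feas h l p x" and uv: "0 \<le> u" "0 \<le> v" "u + v = 1"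
  have "h i (x, u *\<^sub>R y1 + v *\<^sub>R y2) \<le> 0" if i: "i \<in> idxI l" for i
  proof -
    have "h i (x, (1 - v) *\<^sub>R y1 + v *\<^sub>R y2) \<le> (1 - v) * h i (x, y1) + v * h i (x, y2)"
      using convex_onD[OF conv[rule_format, OF i], of v y1 y2] uv by simp
    then have "h i (x, u *\<^sub>R y1 + v *\<^sub>R y2) \<le> u * h i (x, y1) + v * h i (x, y2)"
      using uv(3) by (simp add: eq_diff_eq[symmetric])
    moreover have "h i (x, y1) \<le> 0" "h i (x, y2) \<le> 0"
      using y i unfolding feas_def by auto
    ultimately show ?thesis
      using uv mult_nonneg_nonpos by (smt (verit))
  qed
  moreover have "h i (x, u *\<^sub>R y1 + v *\<^sub>R y2) = 0" if i: "i \<in> idxJ l p" for i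
  proof -
    obtain a b where ab: "\<And>y. h i (x, y) = inner a y + b"
      using affine i by blast
    then have "inner a y1 = - b" "inner a y2 = - b"
      using y i unfolding feas_def by (auto simp: eq_neg_iff_add_eq_0)
    then have "inner a (u *\<^sub>R y1 + v *\<^sub>R y2) = - ((u + v) * b)"
      by (simp add: inner_add_right algebra_simps)
    then show ?thesis
      using uv(3) by (simp add: ab)
  qed
  ultimately show "u *\<^sub>R y1 + v *\<^sub>R y2 \<in> feas h l p x"
    unfolding feas_def by auto
qed

lemma convex_feas_lower_estimate:
  fixes h :: "nat \<Rightarrow> (real^'n) \<times> (real^'m) \<Rightarrow> real"
  assumes "l \<le> p" "\<forall>i\<in>{1..p}. C1_fun (h i)" and conv: "convex (feas h l p xb)"
    and bound: "\<forall>u\<in>feas h l p xb. feas_aubin_bound h l p xb u \<delta> \<kappa>"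
    and x: "dist x xb < \<delta>" "\<kappa> * dist x xb < \<delta> / 2" and nonempty: "feas h l p x \<noteq> {}"
    and usc: "\<forall>y\<in>feas h l p x. \<exists>u\<in>feas h l p xb. dist y u < \<delta>"
  shows "\<forall>u\<in>feas h l p xb. \<exists>w\<in>feas h l p x. dist w u \<le> \<kappa> * dist x xb"
proof -
  have "\<delta> > 0"
    using x(1) zero_le_dist[of x xb] by linarith
  define D where "D u = infdist u (feas h l p x)" for u
  have closed: "closed (feas h l p x)"
    by (rule closed_feas[OF assms(1,2)])
  have near: "\<exists>w\<in>feas h l p x. dist w u \<le> \<kappa> * dist x xb" if u: "u \<in> feas h l p xb" and "D u < \<delta>" for u
  proof -
    obtain w where w: "w \<in> feas h l p x" "infdist u (feas h l p x) = dist u w"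
      using infdist_attains_inf[OF closed nonempty] by blast
    have "x \<in> ball xb \<delta>" "xb \<in> ball xb \<delta>" "dist w u < \<delta>" "dist u u < \<delta>"
      using x \<open>\<delta> > 0\<close> \<open>D u < \<delta>\<close> w(2) by (auto simp: D_def dist_commute)
    then show ?thesis
      using bound u w(1) unfolding feas_aubin_bound_def by blast
  qed
  have gap: "D u < \<delta> / 2" if u: "u \<in> feas h l p xb" and Du: "D u < \<delta>" for u
  proof -
    obtain w where "w \<in> feas h l p x" "dist w u \<le> \<kappa> * dist x xb"
      using near[OF u Du] by blast
    then show ?thesis
      using infdist_le[of w "feas h l p x" u] x(2) by (simp add: D_def dist_commute)
  qed
  obtain w0 u0 where "w0 \<in> feas h l p x" "u0 \<in> feas h l p xb" "dist w0 u0 < \<delta>"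
    using nonempty usc by blast
  then have "D u0 < \<delta>"
    using infdist_le[of w0 "feas h l p x" u0] by (simp add: D_def dist_commute)
  \<comment> \<open>\<open>D\<close> is continuous on the connected set \<open>feas h l p xb\<close>, takes a value below \<open>\<delta>\<close>, and
    by \<open>gap\<close> omits \<open>[\<delta>/2, \<delta>)\<close>; so it stays below \<open>\<delta>\<close>\<close>
  have "D u < \<delta>" if u: "u \<in> feas h l p xb" for u
  proof (rule ccontr)
    assume "\<not> D u < \<delta>"
    have "connected (D ` feas h l p xb)"
      using conv convex_connected by (auto simp: D_def intro!: connected_continuous_image continuous_intros)
    moreover have "D u0 \<in> D ` feas h l p xb" "D u \<in> D ` feas h l p xb"
      using \<open>u0 \<in> feas h l p xb\<close> u by auto
    moreover have "D u0 \<le> 3 * \<delta> / 4" "3 * \<delta> / 4 \<le> D u"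
      using gap[OF \<open>u0 \<in> feas h l p xb\<close> \<open>D u0 < \<delta>\<close>] \<open>\<not> D u < \<delta>\<close> \<open>D u0 < \<delta>\<close> \<open>\<delta> > 0\<close>
      by auto
    ultimately have "3 * \<delta> / 4 \<in> D ` feas h l p xb"
      by (rule connectedD_interval)
    then obtain u' where "u' \<in> feas h l p xb" "D u' = 3 * \<delta> / 4"
      by (metis imageE)
    then show False
      using gap[of u'] \<open>\<delta> > 0\<close> by simp
  qed
  then show ?thesis
    using near by blast
qed

section \<open>The optimal value function\<close>

lemma optval_eq_argmin:
  assumes "y \<in> argminset f h l p x"
  shows "optval f h l p x = ereal (f (x, y))"
  unfolding optval_def
  by (rule INF_eqI) (use assms in \<open>auto simp: argminset_def\<close>)

lemma argminset_nonempty: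
  assumes "C1_fun f" "compact (feas h l p x)" "feas h l p x \<noteq> {}"
  shows "argminset f h l p x \<noteq> {}"
proof -
  obtain y where "y \<in> feas h l p x" "\<forall>y'\<in>feas h l p x. f (x, y) \<le> f (x, y')"
    using continuous_attains_inf[OF assms(2,3) C1_fun_continuous_slice[OF assms(1)]] by blast
  then show ?thesis
    unfolding argminset_def by blast
qed

lemma optval_le_transfer:
  fixes f :: "(real^'n) \<times> (real^'m) \<Rightarrow> real"
  assumes L: "L-lipschitz_on C f" and "(x, z) \<in> C" "(x', y') \<in> C"
    and y: "y \<in> argminset f h l p x" and y': "y' \<in> argminset f h l p x'" and z: "z \<in> feas h l p x"
    and zy': "dist z y' \<le> \<kappa> * dist x x'"
  shows "real_of_ereal (optval f h l p x) \<le> real_of_ereal (optval f h l p x') + L * (1 + \<kappa>) * dist x x'"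
proof -
  have "f (x, z) \<le> f (x', y') + L * dist (x, z) (x', y')"
    using lipschitz_onD[OF L assms(2,3)] by (simp add: dist_real_def)
  also have "\<dots> \<le> f (x', y') + L * (dist x x' + \<kappa> * dist x x')"
    using lipschitz_on_nonneg[OF L] zy' dist_Pair_Pair[of x z x' y']
      sqrt_sum_squares_le_sum_abs[of "dist x x'" "dist z y'"]
    by (intro add_left_mono mult_left_mono) auto
  finally have "f (x, z) \<le> f (x', y') + L * (1 + \<kappa>) * dist x x'"
    by (simp add: algebra_simps)
  moreover have "f (x, y) \<le> f (x, z)"
    using y z by (auto simp: argminset_def)
  ultimately show ?thesis
    using optval_eq_argmin[OF y] optval_eq_argmin[OF y'] by simp
qed

lemma optval_locally_lipschitz:
  fixes f :: "(real^'n) \<times> (real^'m) \<Rightarrow> real"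
  assumes "C1_fun f" "e > 0" "\<kappa> \<ge> 0" "bounded Y"
    and nonempty: "\<And>x. x \<in> ball xb e \<Longrightarrow> argminset f h l p x \<noteq> {}"
    and transfer: "\<And>x x'. x \<in> ball xb e \<Longrightarrow> x' \<in> ball xb e \<Longrightarrow>
       \<exists>y'\<in>argminset f h l p x' \<inter> Y. \<exists>z\<in>feas h l p x. dist z y' \<le> \<kappa> * dist x x'"
  shows "locally_lipschitz_at_ereal (optval f h l p) xb"
proof -
  obtain R where R: "\<And>y. y \<in> Y \<Longrightarrow> norm y \<le> R"
    using \<open>bounded Y\<close> bounded_iff by blast
  define s where "s = 2 * e * \<kappa>"
  obtain L where L: "L-lipschitz_on (cball 0 (norm xb + e + R + s)) f"
    using C1_fun_lipschitz_on_cball[OF \<open>C1_fun f\<close>] by blast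
  have one_sided: "real_of_ereal (optval f h l p x) \<le> real_of_ereal (optval f h l p x') + L * (1 + \<kappa>) * dist x x'"
    if x: "x \<in> ball xb e" and x': "x' \<in> ball xb e" for x x'
  proof -
    obtain y' z where y': "y' \<in> argminset f h l p x'" "y' \<in> Y" and z: "z \<in> feas h l p x"
      and zy': "dist z y' \<le> \<kappa> * dist x x'"
      using transfer[OF x x'] by blast
    obtain y where y: "y \<in> argminset f h l p x"
      using nonempty[OF x] by blast
    have "dist x x' < 2 * e"
      using dist_triangle[of x x' xb] x x' by (simp add: dist_commute)
    then have "\<kappa> * dist x x' \<le> s"
      using \<open>\<kappa> \<ge> 0\<close> by (simp add: s_def mult_left_mono mult.commute)
    moreover have "0 \<le> s"
      using \<open>e > 0\<close> \<open>\<kappa> \<ge> 0\<close> by (simp add: s_def)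
    ultimately have "norm (x, z) \<le> norm xb + e + R + s" "norm (x', y') \<le> norm xb + e + R + s"
      using norm_Pair_le[of x z] norm_Pair_le[of x' y'] norm_triangle_ineq2[of x xb] norm_triangle_ineq2[of x' xb]
        norm_triangle_ineq2[of z y'] R[OF y'(2)] x x' zy' \<open>e > 0\<close>
      by (auto simp: dist_norm norm_minus_commute)
    then show ?thesis
      using optval_le_transfer[OF L _ _ y y'(1) z zy'] by simp
  qed
  show ?thesis
    unfolding locally_lipschitz_at_ereal_def
  proof (intro exI conjI ballI)
    show "\<bar>optval f h l p x\<bar> \<noteq> \<infinity>" if "x \<in> ball xb e" for x
      using nonempty[OF that] optval_eq_argmin by fastforce
    show "(L * (1 + \<kappa>))-lipschitz_on (ball xb e) (\<lambda>x. real_of_ereal (optval f h l p x))"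
      using one_sided lipschitz_on_nonneg[OF L] \<open>\<kappa> \<ge> 0\<close>
      by (intro lipschitz_onI) (force simp: dist_real_def dist_commute abs_le_iff)+
  qed (fact \<open>e > 0\<close>)
qed

lemma inner_semicont_atD:
  assumes "inner_semicont_at S xb yb" "\<epsilon> > 0"
  obtains e where "e > 0" "\<And>x. x \<in> ball xb e \<Longrightarrow> \<exists>y\<in>S x. dist y yb < \<epsilon>"
proof (rule ccontr)
  assume "\<not> thesis"
  then have "\<exists>x. x \<in> ball xb (1 / Suc n) \<and> (\<forall>y\<in>S x. \<epsilon> \<le> dist y yb)" for n
    using that[of "1 / Suc n"] by (force simp: not_less)
  then obtain X where X: "\<And>n. X n \<in> ball xb (1 / Suc n)" "\<And>n y. y \<in> S (X n) \<Longrightarrow> \<epsilon> \<le> dist y yb"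
    by metis
  have "X \<longlonglongrightarrow> xb"
  proof (subst tendsto_dist_iff, rule Lim_null_comparison)
    show "\<forall>\<^sub>F n in sequentially. norm (dist (X n) xb) \<le> inverse (real (Suc n))"
      using X(1) by (intro always_eventually allI) (simp add: dist_commute inverse_eq_divide less_imp_le)
  qed (rule LIMSEQ_inverse_real_of_nat)
  then obtain Y where "Y \<longlonglongrightarrow> yb" and in_S: "\<forall>\<^sub>F k in sequentially. Y k \<in> S (X k)"
    using assms(1) unfolding inner_semicont_at_def by blast
  then have "\<forall>\<^sub>F k in sequentially. dist (Y k) yb < \<epsilon>"
    using \<open>\<epsilon> > 0\<close> unfolding tendsto_iff by blast
  with in_S have "\<forall>\<^sub>F k in sequentially. False"
    by eventually_elim (use X(2) in force)
  then show False
    by simp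
qed

lemma optval_locally_lipschitz_inner_semicont:
  fixes f :: "(real^'n) \<times> (real^'m) \<Rightarrow> real" and h :: "nat \<Rightarrow> (real^'n) \<times> (real^'m) \<Rightarrow> real"
  assumes lp: "l \<le> p" and "C1_fun f" and C1: "\<forall>i\<in>{1..p}. C1_fun (h i)"
    and yb: "yb \<in> argminset f h l p xb" and isc: "inner_semicont_at (argminset f h l p) xb yb"
    and "RCPLD h l p xb yb"
  shows "locally_lipschitz_at_ereal (optval f h l p) xb"
proof -
  have "yb \<in> feas h l p xb"
    using yb by (simp add: argminset_def)
  then obtain \<delta> \<kappa> where "\<delta> > 0" "\<kappa> \<ge> 0" and bound: "feas_aubin_bound h l p xb yb \<delta> \<kappa>"
    using local_feas_aubin_bound[OF lp C1] \<open>RCPLD h l p xb yb\<close> by blast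
  obtain e0 where "e0 > 0" and near: "\<And>x. x \<in> ball xb e0 \<Longrightarrow> \<exists>y\<in>argminset f h l p x. dist y yb < \<delta> / 2"
    using inner_semicont_atD[OF isc, of "\<delta> / 2"] \<open>\<delta> > 0\<close> by auto
  define e where "e = min e0 \<delta>"
  show ?thesis
  proof (rule optval_locally_lipschitz[where Y="ball yb (\<delta> / 2)"])
    show "e > 0" "bounded (ball yb (\<delta> / 2))"
      using \<open>e0 > 0\<close> \<open>\<delta> > 0\<close> by (auto simp: e_def)
    show "argminset f h l p x \<noteq> {}" if "x \<in> ball xb e" for x
      using near[of x] that by (auto simp: e_def)
    show "\<exists>y'\<in>argminset f h l p x' \<inter> ball yb (\<delta> / 2). \<exists>z\<in>feas h l p x. dist z y' \<le> \<kappa> * dist x x'"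
      if x: "x \<in> ball xb e" and x': "x' \<in> ball xb e" for x x'
    proof -
      have "x \<in> ball xb e0" "x' \<in> ball xb e0"
        using x x' by (auto simp: e_def)
      then obtain y' w where y': "y' \<in> argminset f h l p x'" "dist y' yb < \<delta> / 2"
        and w: "w \<in> argminset f h l p x" "dist w yb < \<delta> / 2"
        using near by blast
      then have "dist w y' < \<delta>"
        using dist_triangle3[of w y' yb] by (simp add: dist_commute)
      moreover have "x \<in> ball xb \<delta>" "x' \<in> ball xb \<delta>" "dist y' yb < \<delta>"
        using x x' y'(2) \<open>\<delta> > 0\<close> by (auto simp: e_def)
      moreover have "y' \<in> feas h l p x'" "w \<in> feas h l p x"
        using y'(1) w(1) by (auto simp: argminset_def)
      ultimately obtain z where "z \<in> feas h l p x" "dist z y' \<le> \<kappa> * dist x x'"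
        using bound unfolding feas_aubin_bound_def by blast
      then show ?thesis
        using y' by (auto simp: dist_commute)
    qed
  qed fact+
qed

lemma locally_bounded_feas_compact:
  fixes h :: "nat \<Rightarrow> (real^'n) \<times> (real^'m) \<Rightarrow> real"
  assumes lp: "l \<le> p" and C1: "\<forall>i\<in>{1..p}. C1_fun (h i)"
    and bounded: "locally_bounded_at (feas h l p) xb" and interior: "xb \<in> interior (domset (feas h l p))"
  obtains B e where "bounded B" "e > 0"
    "\<And>x. x \<in> ball xb e \<Longrightarrow> compact (feas h l p x) \<and> feas h l p x \<noteq> {} \<and> feas h l p x \<subseteq> B"
proof -
  obtain B V where "bounded B" "open V" "xb \<in> V" and B: "\<And>x. x \<in> V \<Longrightarrow> feas h l p x \<subseteq> B"
    using bounded unfolding locally_bounded_at_def by blast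
  have "open (V \<inter> interior (domset (feas h l p)))" "xb \<in> V \<inter> interior (domset (feas h l p))"
    using \<open>open V\<close> \<open>xb \<in> V\<close> interior by auto
  then obtain e where "e > 0" and e: "ball xb e \<subseteq> V \<inter> interior (domset (feas h l p))"
    using open_contains_ball by blast
  have "compact (feas h l p x) \<and> feas h l p x \<noteq> {} \<and> feas h l p x \<subseteq> B" if "x \<in> ball xb e" for x
  proof -
    have "x \<in> V" "x \<in> domset (feas h l p)"
      using that e interior_subset by blast+
    then have "x \<in> V" "feas h l p x \<noteq> {}"
      by (auto simp: domset_def)
    then show ?thesis
      using B[of x] closed_feas[OF lp C1] bounded_subset[OF \<open>bounded B\<close>]
      by (auto simp: compact_eq_bounded_closed)
  qed
  with \<open>bounded B\<close> \<open>e > 0\<close> show thesis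
    using that by blast
qed

lemma convex_feas_lower_lipschitz:
  fixes h :: "nat \<Rightarrow> (real^'n) \<times> (real^'m) \<Rightarrow> real"
  assumes lp: "l \<le> p" and C1: "\<forall>i\<in>{1..p}. C1_fun (h i)" and conv: "convex (feas h l p xb)"
    and bound: "\<forall>u\<in>feas h l p xb. feas_aubin_bound h l p xb u \<delta> \<kappa>" and "\<delta> > 0" "\<kappa> \<ge> 0"
    and bounded: "locally_bounded_at (feas h l p) xb"
    and "e0 > 0" and nonempty: "\<And>x. x \<in> ball xb e0 \<Longrightarrow> feas h l p x \<noteq> {}"
  obtains e where "e > 0" "\<And>x. x \<in> ball xb e \<Longrightarrow> \<kappa> * dist x xb < \<delta> / 2"
    "\<And>x u. x \<in> ball xb e \<Longrightarrow> u \<in> feas h l p xb \<Longrightarrow> \<exists>w\<in>feas h l p x. dist w u \<le> \<kappa> * dist x xb"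
proof -
  obtain e1 where "e1 > 0" and usc: "\<forall>x\<in>ball xb e1. \<forall>y\<in>feas h l p x. \<exists>u\<in>feas h l p xb. dist y u < \<delta>"
    using feas_upper_semicontinuous[OF lp C1 bounded \<open>\<delta> > 0\<close>] by blast
  define e where "e = min (min e0 e1) (min \<delta> (\<delta> / (2 * \<kappa> + 2)))"
  have small: "\<kappa> * dist x xb < \<delta> / 2" if "x \<in> ball xb e" for x
  proof -
    have "\<kappa> * dist x xb \<le> \<kappa> * (\<delta> / (2 * \<kappa> + 2))"
      using that \<open>\<kappa> \<ge> 0\<close> by (intro mult_left_mono) (auto simp: e_def dist_commute)
    also have "\<dots> < \<delta> / 2"
      using \<open>\<kappa> \<ge> 0\<close> \<open>\<delta> > 0\<close> by (simp add: field_simps)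
    finally show ?thesis .
  qed
  show thesis
  proof (rule that[OF _ small])
    show "e > 0"
      using \<open>e0 > 0\<close> \<open>e1 > 0\<close> \<open>\<delta> > 0\<close> \<open>\<kappa> \<ge> 0\<close> by (simp add: e_def)
    fix x u
    assume "x \<in> ball xb e" "u \<in> feas h l p xb"
    moreover have "dist x xb < \<delta>" "x \<in> ball xb e0" "x \<in> ball xb e1"
      using \<open>x \<in> ball xb e\<close> by (auto simp: e_def dist_commute)
    ultimately show "\<exists>w\<in>feas h l p x. dist w u \<le> \<kappa> * dist x xb"
      using convex_feas_lower_estimate[OF lp C1 conv bound _ small nonempty] usc by blast
  qed
qed

lemma optval_locally_lipschitz_convex:
  fixes f :: "(real^'n) \<times> (real^'m) \<Rightarrow> real" and h :: "nat \<Rightarrow> (real^'n) \<times> (real^'m) \<Rightarrow> real"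
  assumes lp: "l \<le> p" and "C1_fun f" and C1: "\<forall>i\<in>{1..p}. C1_fun (h i)"
    and conv: "\<forall>i\<in>idxI l. convex_on UNIV (\<lambda>y. h i (xb, y))"
    and affine: "\<forall>i\<in>idxJ l p. \<exists>a b. \<forall>y. h i (xb, y) = inner a y + b"
    and bounded: "locally_bounded_at (feas h l p) xb"
    and R: "\<forall>y\<in>feas h l p xb. RCPLD h l p xb y"
    and interior: "xb \<in> interior (domset (feas h l p))"
  shows "locally_lipschitz_at_ereal (optval f h l p) xb"
proof -
  obtain B e1 where "bounded B" "e1 > 0"
    and near: "\<And>x. x \<in> ball xb e1 \<Longrightarrow> compact (feas h l p x) \<and> feas h l p x \<noteq> {} \<and> feas h l p x \<subseteq> B"
    using locally_bounded_feas_compact[OF lp C1 bounded interior] by blast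
  obtain \<delta> \<kappa> where "\<delta> > 0" "\<kappa> \<ge> 0" and bound: "\<forall>u\<in>feas h l p xb. feas_aubin_bound h l p xb u \<delta> \<kappa>"
    using uniform_feas_aubin_bound[OF lp C1 _ R] near[of xb] \<open>e1 > 0\<close> by auto
  obtain e2 where "e2 > 0" and small: "\<And>x. x \<in> ball xb e2 \<Longrightarrow> \<kappa> * dist x xb < \<delta> / 2"
    and lower: "\<And>x u. x \<in> ball xb e2 \<Longrightarrow> u \<in> feas h l p xb \<Longrightarrow> \<exists>w\<in>feas h l p x. dist w u \<le> \<kappa> * dist x xb"
    using convex_feas_lower_lipschitz[OF lp C1 convex_feas[OF conv affine] bound \<open>\<delta> > 0\<close> \<open>\<kappa> \<ge> 0\<close>
      bounded \<open>e1 > 0\<close>] near by blast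
  obtain e3 where "e3 > 0" and usc: "\<forall>x\<in>ball xb e3. \<forall>y\<in>feas h l p x. \<exists>u\<in>feas h l p xb. dist y u < \<delta> / 2"
    using feas_upper_semicontinuous[OF lp C1 bounded, of "\<delta> / 2"] \<open>\<delta> > 0\<close> by auto
  define e where "e = min (min e1 e2) (min e3 \<delta>)"
  show ?thesis
  proof (rule optval_locally_lipschitz[where Y=B])
    show "e > 0"
      using \<open>e1 > 0\<close> \<open>e2 > 0\<close> \<open>e3 > 0\<close> \<open>\<delta> > 0\<close> by (simp add: e_def)
    show "argminset f h l p x \<noteq> {}" if "x \<in> ball xb e" for x
      using argminset_nonempty[OF \<open>C1_fun f\<close>] near that by (simp add: e_def)
    show "\<exists>y'\<in>argminset f h l p x' \<inter> B. \<exists>z\<in>feas h l p x. dist z y' \<le> \<kappa> * dist x x'"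
      if x: "x \<in> ball xb e" and x': "x' \<in> ball xb e" for x x'
    proof -
      obtain y' where y': "y' \<in> argminset f h l p x'"
        using argminset_nonempty[OF \<open>C1_fun f\<close>] near x' by (fastforce simp: e_def)
      then have "y' \<in> feas h l p x'" "y' \<in> B"
        using near x' by (auto simp: argminset_def e_def)
      moreover have "x' \<in> ball xb e3"
        using x' by (simp add: e_def)
      ultimately obtain u where u: "u \<in> feas h l p xb" "dist y' u < \<delta> / 2"
        using usc by blast
      have "x \<in> ball xb e2"
        using x by (simp add: e_def)
      then obtain w where "w \<in> feas h l p x" "dist w u \<le> \<kappa> * dist x xb"
        using lower u(1) by blast
      moreover have "dist w y' < \<delta>"
        using dist_triangle3[of w y' u] \<open>dist w u \<le> \<kappa> * dist x xb\<close> small[OF \<open>x \<in> ball xb e2\<close>] u(2)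
        by (simp add: dist_commute)
      moreover have "x \<in> ball xb \<delta>" "x' \<in> ball xb \<delta>" "dist y' u < \<delta>"
        using x x' u(2) \<open>\<delta> > 0\<close> by (auto simp: e_def)
      ultimately obtain z where "z \<in> feas h l p x" "dist z y' \<le> \<kappa> * dist x x'"
        using bound u(1) \<open>y' \<in> feas h l p x'\<close> unfolding feas_aubin_bound_def by blast
      then show ?thesis
        using y' \<open>y' \<in> B\<close> by blast
    qed
  qed fact+
qed

theorem corollary4p4:
  fixes f :: "(real^'n) \<times> (real^'m) \<Rightarrow> real"
    and h :: "nat \<Rightarrow> (real^'n) \<times> (real^'m) \<Rightarrow> real"
    and l p :: nat
    and xb :: "real^'n"
  assumes "l \<le> p"
    and "C1_fun f"
    and "\<forall>i\<in>{1..p}. C1_fun (h i)"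
    and "xb \<in> domset (feas h l p)"
    and "((\<forall>x. (\<forall>i\<in>idxI l. convex_on UNIV (\<lambda>y. h i (x, y))) \<and>
               (\<forall>i\<in>idxJ l p. \<exists>a b. \<forall>y. h i (x, y) = inner a y + b))
          \<and> locally_bounded_at (feas h l p) xb
          \<and> (\<forall>y\<in>feas h l p xb. RCPLD h l p xb y)
          \<and> xb \<in> interior (domset (feas h l p)))
       \<or> (\<exists>yb\<in>argminset f h l p xb. inner_semicont_at (argminset f h l p) xb yb \<and> RCPLD h l p xb yb)"
  shows "locally_lipschitz_at_ereal (optval f h l p) xb"
  using assms(5)
proof
  assume "(\<forall>x. (\<forall>i\<in>idxI l. convex_on UNIV (\<lambda>y. h i (x, y))) \<and>
               (\<forall>i\<in>idxJ l p. \<exists>a b. \<forall>y. h i (x, y) = inner a y + b))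
          \<and> locally_bounded_at (feas h l p) xb
          \<and> (\<forall>y\<in>feas h l p xb. RCPLD h l p xb y)
          \<and> xb \<in> interior (domset (feas h l p))"
  then show ?thesis
    using optval_locally_lipschitz_convex[OF assms(1-3)] by blast
next
  assume "\<exists>yb\<in>argminset f h l p xb. inner_semicont_at (argminset f h l p) xb yb \<and> RCPLD h l p xb yb"
  then show ?thesis
    using optval_locally_lipschitz_inner_semicont[OF assms(1-3)] by blast
qed

end
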